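(* In the kernel SGD setting with hypercontractivity constant $C$, assume $\eta_{\max}:=\max_{0\le i\le N-1}\eta_i\le\lambda_1^{-1}$ and $\eta_{\max}<\frac{1}{2C\,\mathrm{tr}(\mathcal T)}$. Then $\sup_{0\le k\le N}\mathbb E[\mathcal E(\theta_k)]\le M$ for a constant $M$ depending only on $C,\sigma^2$ and $\mathcal E(\theta_0)=\frac12\sum_ja_j^2\lambda_j^s$ (independent of $N$ and of the schedule).
   Context: Kernel SGD setting: $\phi:\mathcal X\to\mathbb H$ with $\mathbb E[K(x,x)]<\infty$, covariance $\mathcal T=\mathbb E[\phi(x)\otimes\phi(x)]$ with eigenpairs $(\lambda_j,v_j)$ and $\mathrm{tr}(\mathcal T)=\sum_j\lambda_j$; $y=f^*(x)+\epsilon$, $\epsilon\sim\mathcal N(0,\sigma^2)$ independent of $x$; $f^*=\sum_ja_j\lambda_j^{s/2}e_j$ with $\sum a_j^2\le1$, $\theta_j^*=a_j\lambda_j^{(s-1)/2}$. Hypercontractivity: $\mathbb E[\langle u,\phi(x)\rangle^2\langle v,\phi(x)\rangle^2]\le C\,\mathbb E[\langle u,\phi(x)\rangle^2]\mathbb E[\langle v,\phi(x)\rangle^2]$. SGD: $\theta_0=0$, $\theta_{k+1}=\theta_k-\eta_k(\langle\theta_k,\phi(x_k)\rangle-y_k)\phi(x_k)$, i.i.d. samples. Excess risk $\mathcal E(\theta)=\frac12\sum_j\lambda_j(\langle\theta,v_j\rangle-\theta_j^* )^2$. *)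

theory Defs
  imports "HOL-Probability.Probability"
begin

definition cov_op :: "'x measure \<Rightarrow> ('x \<Rightarrow> 'h::{real_inner,banach,second_countable_topology}) \<Rightarrow> 'h \<Rightarrow> 'h" where
  "cov_op \<rho> \<phi> u = (\<integral>x. (u \<bullet> \<phi> x) *\<^sub>R \<phi> x \<partial>\<rho>)"

text \<open>(lam j, v j) are the eigenpairs of T in nonincreasing order (lam 0 = lambda_1 is the largest),
  v orthonormal on the indices with positive eigenvalue, and T has the spectral decomposition
  T u = sum_j lam_j <u, v_j> v_j.\<close>
definition eigen_system :: "'x measure \<Rightarrow> ('x \<Rightarrow> 'h::{real_inner,banach,second_countable_topology})
    \<Rightarrow> (nat \<Rightarrow> real) \<Rightarrow> (nat \<Rightarrow> 'h) \<Rightarrow> bool" where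
  "eigen_system \<rho> \<phi> lam v \<longleftrightarrow>
     (\<forall>j. 0 \<le> lam j) \<and> antimono lam \<and>
     (\<forall>i j. 0 < lam i \<longrightarrow> 0 < lam j \<longrightarrow> v i \<bullet> v j = (if i = j then 1 else 0)) \<and>
     (\<forall>j. cov_op \<rho> \<phi> (v j) = lam j *\<^sub>R v j) \<and>
     (\<forall>u. (\<lambda>j. (lam j * (u \<bullet> v j)) *\<^sub>R v j) sums cov_op \<rho> \<phi> u)"

definition hypercontractive :: "'x measure \<Rightarrow> ('x \<Rightarrow> 'h::real_inner) \<Rightarrow> real \<Rightarrow> bool" where
  "hypercontractive \<rho> \<phi> C \<longleftrightarrow>
     (\<forall>u w. (\<integral>\<^sup>+x. ennreal ((u \<bullet> \<phi> x)\<^sup>2 * (w \<bullet> \<phi> x)\<^sup>2) \<partial>\<rho>)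
        \<le> ennreal C * (\<integral>\<^sup>+x. ennreal ((u \<bullet> \<phi> x)\<^sup>2) \<partial>\<rho>) * (\<integral>\<^sup>+x. ennreal ((w \<bullet> \<phi> x)\<^sup>2) \<partial>\<rho>))"

definition theta_star :: "(nat \<Rightarrow> real) \<Rightarrow> (nat \<Rightarrow> real) \<Rightarrow> real \<Rightarrow> nat \<Rightarrow> real" where
  "theta_star a lam s j = a j * lam j powr ((s - 1) / 2)"

definition excess_risk :: "(nat \<Rightarrow> real) \<Rightarrow> (nat \<Rightarrow> 'h::real_inner) \<Rightarrow> (nat \<Rightarrow> real) \<Rightarrow> 'h \<Rightarrow> ennreal" where
  "excess_risk lam v ts \<theta> = (\<Sum>j. ennreal (1/2 * lam j * (\<theta> \<bullet> v j - ts j)\<^sup>2))"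

primrec sgd_iter :: "(nat \<Rightarrow> real) \<Rightarrow> ('x \<Rightarrow> 'h::real_inner) \<Rightarrow> (nat \<Rightarrow> 'x) \<Rightarrow> (nat \<Rightarrow> real) \<Rightarrow> nat \<Rightarrow> 'h" where
  "sgd_iter \<eta> \<phi> xs ys 0 = 0"
| "sgd_iter \<eta> \<phi> xs ys (Suc k) =
     sgd_iter \<eta> \<phi> xs ys k - (\<eta> k * (sgd_iter \<eta> \<phi> xs ys k \<bullet> \<phi> (xs k) - ys k)) *\<^sub>R \<phi> (xs k)"

end

theory Submission
  imports Defs
begin

text \<open>
  Write \<open>d\<^sub>j(\<theta>) = \<langle>\<theta>, v\<^sub>j\<rangle> - \<theta>\<^sup>*\<^sub>j\<close>, so that \<open>E(\<theta>) = \<Sum>\<^sub>j \<lambda>\<^sub>j d\<^sub>j(\<theta>)\<^sup>2 / 2\<close>.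
  One SGD step with step size \<open>\<eta>\<close> on the sample \<open>(x, \<epsilon>)\<close> changes \<open>d\<^sub>j\<close> by
  \<open>-\<eta> g(x) \<langle>\<phi>(x), v\<^sub>j\<rangle> + \<eta> \<epsilon> \<langle>\<phi>(x), v\<^sub>j\<rangle>\<close>, where \<open>g = \<langle>\<theta>, \<phi>\<rangle> - f\<^sup>*\<close> is the residual.
  Since \<open>E[g \<langle>\<phi>, v\<^sub>j\<rangle>] = \<lambda>\<^sub>j d\<^sub>j\<close> and, by hypercontractivity,
  \<open>E[g\<^sup>2 \<langle>\<phi>, v\<^sub>j\<rangle>\<^sup>2] \<le> 2 C E(\<theta>) \<lambda>\<^sub>j\<close>, every family of weights \<open>\<alpha> \<ge> 0\<close> satisfies
  \<open>E \<Sum>\<^sub>j \<alpha>\<^sub>j d\<^sub>j(\<theta>\<^sub>k\<^sub>+\<^sub>1)\<^sup>2 \<le> E \<Sum>\<^sub>j \<alpha>\<^sub>j (1 - \<eta>\<^sub>k \<lambda>\<^sub>j)\<^sup>2 d\<^sub>j(\<theta>\<^sub>k)\<^sup>2 + \<eta>\<^sub>k\<^sup>2 (2 C E[E(\<theta>\<^sub>k)] + \<sigma>\<^sup>2) \<Sum>\<^sub>j \<alpha>\<^sub>j \<lambda>\<^sub>j\<close>.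
  Unrolling this from \<open>\<alpha>\<^sub>j = \<lambda>\<^sub>j / 2\<close>, the noise contributions telescope to
  \<open>\<Sum>\<^sub>t \<eta>\<^sub>t\<^sup>2 \<lambda>\<^sub>j \<Prod>\<^bsub>t < i < k\<^esub> (1 - \<eta>\<^sub>i \<lambda>\<^sub>j)\<^sup>2 \<le> max\<^sub>t \<eta>\<^sub>t < 1 / (2 C tr T)\<close>, and a strong
  induction on \<open>k\<close> shows \<open>E[E(\<theta>\<^sub>k)] \<le> 2 E(\<theta>\<^sub>0) + \<sigma>\<^sup>2 / (2C)\<close>.
\<close>

lemma tendsto_zero_if_power2_tendsto_zero:
  fixes f :: "'a \<Rightarrow> real"
  assumes "((\<lambda>n. (f n)\<^sup>2) \<longlongrightarrow> 0) F"
  shows "(f \<longlongrightarrow> 0) F"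
proof -
  have "((\<lambda>n. sqrt ((f n)\<^sup>2)) \<longlongrightarrow> sqrt 0) F" by (intro tendsto_real_sqrt assms)
  then show ?thesis by (simp add: tendsto_rabs_zero_iff)
qed

definition square_integrable :: "'a measure \<Rightarrow> ('a \<Rightarrow> real) \<Rightarrow> bool" where
  "square_integrable M f \<longleftrightarrow> f \<in> borel_measurable M \<and> integrable M (\<lambda>x. (f x)\<^sup>2)"

lemma square_integrable_measurable: "square_integrable M f \<Longrightarrow> f \<in> borel_measurable M"
  by (simp add: square_integrable_def)

lemma square_integrable_power2: "square_integrable M f \<Longrightarrow> integrable M (\<lambda>x. (f x)\<^sup>2)"
  by (simp add: square_integrable_def)

lemma square_integrable_mult:
  assumes "square_integrable M f" "square_integrable M g"
  shows "integrable M (\<lambda>x. f x * g x)"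
proof (rule Bochner_Integration.integrable_bound)
  show "integrable M (\<lambda>x. (f x)\<^sup>2 + (g x)\<^sup>2)" using assms by (simp add: square_integrable_def)
  show "(\<lambda>x. f x * g x) \<in> borel_measurable M"
    using assms by (simp add: square_integrable_def borel_measurable_times)
  show "AE x in M. norm (f x * g x) \<le> norm ((f x)\<^sup>2 + (g x)\<^sup>2)"
  proof (intro AE_I2)
    fix x
    have "2 * (\<bar>f x\<bar> * \<bar>g x\<bar>) \<le> (f x)\<^sup>2 + (g x)\<^sup>2"
      using sum_squares_ge_zero[of "\<bar>f x\<bar> - \<bar>g x\<bar>" 0] by (simp add: power2_eq_square algebra_simps)
    moreover have "0 \<le> \<bar>f x\<bar> * \<bar>g x\<bar>" by simp
    ultimately have "\<bar>f x\<bar> * \<bar>g x\<bar> \<le> (f x)\<^sup>2 + (g x)\<^sup>2" by linarith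
    then show "norm (f x * g x) \<le> norm ((f x)\<^sup>2 + (g x)\<^sup>2)" by (simp add: abs_mult)
  qed
qed

lemma square_integrable_add:
  assumes "square_integrable M f" "square_integrable M g"
  shows "square_integrable M (\<lambda>x. f x + g x)"
proof -
  have "integrable M (\<lambda>x. (f x)\<^sup>2 + 2 * (f x * g x) + (g x)\<^sup>2)"
    using assms square_integrable_mult[OF assms] by (simp add: square_integrable_def)
  then show ?thesis
    using assms by (simp add: square_integrable_def power2_eq_square algebra_simps borel_measurable_add)
qed

lemma square_integrable_cmult: "square_integrable M f \<Longrightarrow> square_integrable M (\<lambda>x. c * f x)"
  by (simp add: square_integrable_def power_mult_distrib borel_measurable_times)

lemma square_integrable_diff:
  assumes "square_integrable M f" "square_integrable M g"
  shows "square_integrable M (\<lambda>x. f x - g x)"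
  using square_integrable_add[OF assms(1) square_integrable_cmult[OF assms(2), of "-1"]] by simp

lemma square_integrable_sum:
  "(\<And>i. i \<in> I \<Longrightarrow> square_integrable M (f i)) \<Longrightarrow> square_integrable M (\<lambda>x. \<Sum>i\<in>I. f i x)"
proof (induction I rule: infinite_finite_induct)
  case (insert i I)
  then show ?case by (simp add: square_integrable_add)
qed (simp_all add: square_integrable_def)

lemma (in finite_measure) square_integrable_const: "square_integrable M (\<lambda>x. c)"
  by (simp add: square_integrable_def)

lemma square_integrableI_nn_integral:
  "f \<in> borel_measurable M \<Longrightarrow> (\<integral>\<^sup>+x. ennreal ((f x)\<^sup>2) \<partial>M) < \<infinity> \<Longrightarrow> square_integrable M f"
  unfolding square_integrable_def by (subst integrable_iff_bounded) auto

lemma nn_integral_power2_eq_integral: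
  "square_integrable M f \<Longrightarrow> (\<integral>\<^sup>+x. ennreal ((f x)\<^sup>2) \<partial>M) = ennreal (\<integral>x. (f x)\<^sup>2 \<partial>M)"
  by (intro nn_integral_eq_integral) (auto simp: square_integrable_def)

lemma Cauchy_Schwarz_integral:
  assumes "square_integrable M f" "square_integrable M g"
  shows "(\<integral>x. f x * g x \<partial>M)\<^sup>2 \<le> (\<integral>x. (f x)\<^sup>2 \<partial>M) * (\<integral>x. (g x)\<^sup>2 \<partial>M)"
proof -
  define A where "A = (\<integral>x. (f x)\<^sup>2 \<partial>M)"
  define B where "B = (\<integral>x. f x * g x \<partial>M)"
  define D where "D = (\<integral>x. (g x)\<^sup>2 \<partial>M)"
  have discr: "0 \<le> A - 2 * t * B + t\<^sup>2 * D" for t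
  proof -
    have "0 \<le> (\<integral>x. (f x - t * g x)\<^sup>2 \<partial>M)" by simp
    also have "\<dots> = (\<integral>x. (f x)\<^sup>2 - 2 * t * (f x * g x) + t\<^sup>2 * (g x)\<^sup>2 \<partial>M)"
      by (intro Bochner_Integration.integral_cong) (auto simp: power2_eq_square algebra_simps)
    also have "\<dots> = A - 2 * t * B + t\<^sup>2 * D"
      unfolding A_def B_def D_def using assms square_integrable_mult[OF assms]
      by (simp add: square_integrable_def)
    finally show ?thesis .
  qed
  show ?thesis
  proof (cases "D = 0")
    case True
    have "B = 0"
    proof (rule ccontr)
      assume "B \<noteq> 0"
      have "0 \<le> A - 2 * ((A + 1) / (2 * B)) * B" using discr[of "(A + 1) / (2 * B)"] True by simp
      also have "\<dots> = -1" using \<open>B \<noteq> 0\<close> by (simp add: field_simps)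
      finally show False by simp
    qed
    then show ?thesis using True by (simp add: B_def D_def)
  next
    case False
    then have "0 < D" unfolding D_def by (simp add: order_less_le)
    have "0 \<le> A - 2 * (B / D) * B + (B / D)\<^sup>2 * D" by (rule discr)
    also have "\<dots> = A - B\<^sup>2 / D" using \<open>0 < D\<close> by (simp add: field_simps power2_eq_square)
    finally have "B\<^sup>2 \<le> A * D" using \<open>0 < D\<close> by (simp add: field_simps)
    then show ?thesis unfolding A_def B_def D_def .
  qed
qed

text \<open>Fatou's lemma along an almost everywhere convergent subsequence.\<close>
lemma nn_integral_power2_mult_le_of_approx:
  assumes approx: "\<And>n. square_integrable M (\<lambda>x. f x - g n x)"
    and conv: "(\<lambda>n. \<integral>x. (f x - g n x)\<^sup>2 \<partial>M) \<longlonglongrightarrow> 0"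
    and meas[measurable]: "\<And>n. g n \<in> borel_measurable M" "h \<in> borel_measurable M"
    and bound: "\<And>n. (\<integral>\<^sup>+x. ennreal ((g n x)\<^sup>2 * h x) \<partial>M) \<le> B"
  shows "(\<integral>\<^sup>+x. ennreal ((f x)\<^sup>2 * h x) \<partial>M) \<le> B"
proof -
  have "(\<lambda>n. \<integral>x. norm ((f x - g n x)\<^sup>2) \<partial>M) \<longlonglongrightarrow> 0" using conv by simp
  from tendsto_L1_AE_subseq[OF square_integrable_power2[OF approx] this]
  obtain r :: "nat \<Rightarrow> nat" where "strict_mono r" and ae: "AE x in M. (\<lambda>n. (f x - g (r n) x)\<^sup>2) \<longlonglongrightarrow> 0"
    by blast
  have "AE x in M. (\<lambda>n. ennreal ((g (r n) x)\<^sup>2 * h x)) \<longlonglongrightarrow> ennreal ((f x)\<^sup>2 * h x)"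
    using ae
  proof eventually_elim
    case (elim x)
    have "(\<lambda>n. f x - (f x - g (r n) x)) \<longlonglongrightarrow> f x - 0"
      by (intro tendsto_diff tendsto_const tendsto_zero_if_power2_tendsto_zero[OF elim])
    then have "(\<lambda>n. g (r n) x) \<longlonglongrightarrow> f x" by simp
    then show ?case by (intro tendsto_ennrealI tendsto_intros)
  qed
  then have "AE x in M. ennreal ((f x)\<^sup>2 * h x) = liminf (\<lambda>n. ennreal ((g (r n) x)\<^sup>2 * h x))"
    by eventually_elim (rule lim_imp_Liminf[symmetric], simp_all)
  then have "(\<integral>\<^sup>+x. ennreal ((f x)\<^sup>2 * h x) \<partial>M)
      = (\<integral>\<^sup>+x. liminf (\<lambda>n. ennreal ((g (r n) x)\<^sup>2 * h x)) \<partial>M)"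
    by (rule nn_integral_cong_AE)
  also have "\<dots> \<le> liminf (\<lambda>n. \<integral>\<^sup>+x. ennreal ((g (r n) x)\<^sup>2 * h x) \<partial>M)"
    by (intro nn_integral_liminf) measurable
  also have "\<dots> \<le> limsup (\<lambda>n. \<integral>\<^sup>+x. ennreal ((g (r n) x)\<^sup>2 * h x) \<partial>M)"
    by (rule Liminf_le_Limsup) simp
  also have "\<dots> \<le> B"
    by (intro Limsup_bounded always_eventually allI bound)
  finally show ?thesis .
qed

lemma nn_integral_normal_density_affine_power2:
  fixes \<sigma> A c :: real
  assumes \<sigma>: "0 < \<sigma>"
  shows "(\<integral>\<^sup>+e. ennreal ((A + c * e)\<^sup>2) \<partial>density lborel (normal_density 0 \<sigma>)) = ennreal (A\<^sup>2 + c\<^sup>2 * \<sigma>\<^sup>2)"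
proof -
  let ?n = "normal_density 0 \<sigma>"
  have moment: "integrable lborel (\<lambda>x. ?n x * (x - 0) ^ k)" for k
    by (rule integrable_normal_moment[OF \<sigma>])
  have eq: "(\<lambda>x. ?n x * (A + c * x)\<^sup>2) = (\<lambda>x. A\<^sup>2 * ?n x + (2 * A * c) * (?n x * x) + c\<^sup>2 * (?n x * x\<^sup>2))"
    by (rule ext) (simp add: power2_eq_square algebra_simps)
  have int: "integrable lborel (\<lambda>x. ?n x * (A + c * x)\<^sup>2)"
    unfolding eq using moment[of 0] moment[of 1] moment[of 2] by simp
  have "(\<integral>\<^sup>+e. ennreal ((A + c * e)\<^sup>2) \<partial>density lborel ?n) = (\<integral>\<^sup>+e. ennreal (?n e) * ennreal ((A + c * e)\<^sup>2) \<partial>lborel)"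
    by (subst nn_integral_density) auto
  also have "\<dots> = (\<integral>\<^sup>+e. ennreal (?n e * (A + c * e)\<^sup>2) \<partial>lborel)"
    by (intro nn_integral_cong) (simp add: ennreal_mult)
  also have "\<dots> = ennreal (\<integral>e. ?n e * (A + c * e)\<^sup>2 \<partial>lborel)"
    by (intro nn_integral_eq_integral int) auto
  also have "(\<integral>e. ?n e * (A + c * e)\<^sup>2 \<partial>lborel) = A\<^sup>2 + c\<^sup>2 * \<sigma>\<^sup>2"
  proof -
    have "(\<integral>x. ?n x \<partial>lborel) = 1" "(\<integral>x. ?n x * x \<partial>lborel) = 0" "(\<integral>x. ?n x * x\<^sup>2 \<partial>lborel) = \<sigma>\<^sup>2"
      using integral_normal_moment_even[OF \<sigma>, of 0 0] integral_normal_moment_odd[OF \<sigma>, of 0 0]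
        integral_normal_moment_even[OF \<sigma>, of 0 1]
      by (simp_all add: eval_nat_numeral)
    then show ?thesis unfolding eq using moment[of 0] moment[of 1] moment[of 2] by simp
  qed
  finally show ?thesis .
qed

lemma bessel_inequality:
  fixes y :: "'a::real_inner"
  assumes "finite J" and orthonormal: "\<And>i j. i \<in> J \<Longrightarrow> j \<in> J \<Longrightarrow> v i \<bullet> v j = (if i = j then 1 else 0)"
  shows "(\<Sum>j\<in>J. (y \<bullet> v j)\<^sup>2) \<le> (norm y)\<^sup>2"
proof -
  define p where "p = (\<Sum>j\<in>J. (y \<bullet> v j) *\<^sub>R v j)"
  have yp: "y \<bullet> p = (\<Sum>j\<in>J. (y \<bullet> v j)\<^sup>2)"
    unfolding p_def by (simp add: inner_sum_right power2_eq_square)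
  have vp: "v i \<bullet> p = y \<bullet> v i" if "i \<in> J" for i
  proof -
    have "v i \<bullet> p = (\<Sum>j\<in>J. (y \<bullet> v j) * (v i \<bullet> v j))"
      unfolding p_def by (simp add: inner_sum_right)
    also have "\<dots> = (\<Sum>j\<in>J. if i = j then y \<bullet> v j else 0)"
      using orthonormal that by (intro sum.cong) auto
    finally show ?thesis using assms(1) that by simp
  qed
  have "p \<bullet> p = (\<Sum>i\<in>J. (y \<bullet> v i) * (v i \<bullet> p))"
    by (subst (1) p_def) (simp add: inner_sum_left)
  also have "\<dots> = (\<Sum>i\<in>J. (y \<bullet> v i)\<^sup>2)"
    using vp by (intro sum.cong) (auto simp: power2_eq_square)
  finally have "p \<bullet> p = (\<Sum>i\<in>J. (y \<bullet> v i)\<^sup>2)" .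
  moreover have "0 \<le> (y - p) \<bullet> (y - p)" by simp
  ultimately show ?thesis
    using yp by (simp add: power2_norm_eq_inner inner_diff_left inner_diff_right inner_commute)
qed

lemma sum_mult_prod_one_minus:
  fixes b :: "nat \<Rightarrow> real"
  shows "(\<Sum>t<k. b t * (\<Prod>i\<in>{Suc t..<k}. (1 - b i))) = 1 - (\<Prod>i<k. (1 - b i))"
proof (induction k)
  case (Suc k)
  have "(\<Sum>t<Suc k. b t * (\<Prod>i\<in>{Suc t..<Suc k}. (1 - b i)))
     = (\<Sum>t<k. b t * (\<Prod>i\<in>{Suc t..<k}. (1 - b i))) * (1 - b k) + b k"
    by (simp add: prod.atLeastLessThan_Suc sum_distrib_right mult.assoc)
  then show ?case unfolding Suc.IH by (simp add: algebra_simps)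
qed simp

lemma sum_mult_prod_one_minus_power2_le:
  fixes b \<eta> :: "nat \<Rightarrow> real"
  assumes b: "\<And>t. t < k \<Longrightarrow> 0 \<le> b t \<and> b t \<le> 1"
    and \<eta>: "\<And>t. t < k \<Longrightarrow> 0 \<le> \<eta> t \<and> \<eta> t \<le> B" and "0 \<le> B"
  shows "(\<Sum>t<k. \<eta> t * b t * (\<Prod>i\<in>{Suc t..<k}. (1 - b i)\<^sup>2)) \<le> B"
proof -
  have tail_nonneg: "0 \<le> (\<Prod>i\<in>{u..<k}. (1 - b i))" for u
    using b by (auto intro!: prod_nonneg)
  have "(\<Sum>t<k. \<eta> t * b t * (\<Prod>i\<in>{Suc t..<k}. (1 - b i)\<^sup>2))
      \<le> (\<Sum>t<k. B * (b t * (\<Prod>i\<in>{Suc t..<k}. (1 - b i))))"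
  proof (intro sum_mono)
    fix t assume "t \<in> {..<k}"
    then have t: "t < k" by simp
    have "(\<Prod>i\<in>{Suc t..<k}. (1 - b i)\<^sup>2) \<le> (\<Prod>i\<in>{Suc t..<k}. (1 - b i))"
      using t b by (intro prod_mono) (auto simp: power2_eq_square mult_left_le)
    then have le: "b t * (\<Prod>i\<in>{Suc t..<k}. (1 - b i)\<^sup>2) \<le> b t * (\<Prod>i\<in>{Suc t..<k}. (1 - b i))"
      using b[OF t] by (intro mult_left_mono) auto
    have nonneg: "0 \<le> b t * (\<Prod>i\<in>{Suc t..<k}. (1 - b i)\<^sup>2)"
      using b[OF t] by (simp add: prod_nonneg)
    have "\<eta> t * (b t * (\<Prod>i\<in>{Suc t..<k}. (1 - b i)\<^sup>2)) \<le> B * (b t * (\<Prod>i\<in>{Suc t..<k}. (1 - b i)))"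
      using mult_mono[OF conjunct2[OF \<eta>[OF t]] le \<open>0 \<le> B\<close> nonneg] .
    then show "\<eta> t * b t * (\<Prod>i\<in>{Suc t..<k}. (1 - b i)\<^sup>2) \<le> B * (b t * (\<Prod>i\<in>{Suc t..<k}. (1 - b i)))"
      by (simp add: mult.assoc)
  qed
  also have "\<dots> = B * (1 - (\<Prod>i<k. (1 - b i)))"
    by (simp add: sum_distrib_left[symmetric] sum_mult_prod_one_minus)
  also have "\<dots> \<le> B"
    using tail_nonneg[of 0] \<open>0 \<le> B\<close> by (simp add: atLeast0LessThan mult_left_le)
  finally show ?thesis .
qed

lemma sgd_iter_cong:
  "(\<And>i. i < k \<Longrightarrow> xs i = xs' i \<and> ys i = ys' i) \<Longrightarrow> sgd_iter \<eta> \<phi> xs ys k = sgd_iter \<eta> \<phi> xs' ys' k"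
  by (induction k) auto

lemma (in prob_space) nn_integral_indep_var:
  assumes indep: "indep_var S X T Y"
    and F: "(\<lambda>p. F (fst p) (snd p)) \<in> borel_measurable (S \<Otimes>\<^sub>M T)"
  shows "(\<integral>\<^sup>+\<omega>. F (X \<omega>) (Y \<omega>) \<partial>M) = (\<integral>\<^sup>+\<omega>. (\<integral>\<^sup>+y. F (X \<omega>) y \<partial>distr M T Y) \<partial>M)"
proof -
  have [measurable]: "X \<in> measurable M S" "Y \<in> measurable M T"
    using indep_var_rv1[OF indep] indep_var_rv2[OF indep] by auto
  interpret Y: prob_space "distr M T Y" by (rule prob_space_distr) simp
  have F_distr: "(\<lambda>p. F (fst p) (snd p)) \<in> borel_measurable (distr M S X \<Otimes>\<^sub>M distr M T Y)"
    using F by (subst measurable_cong_sets[OF sets_pair_measure_cong[OF sets_distr sets_distr] refl]) auto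
  have F_S: "(\<lambda>p. F (fst p) (snd p)) \<in> borel_measurable (S \<Otimes>\<^sub>M distr M T Y)"
    using F by (subst measurable_cong_sets[OF sets_pair_measure_cong[OF refl sets_distr] refl]) auto
  have "(\<integral>\<^sup>+\<omega>. F (X \<omega>) (Y \<omega>) \<partial>M) = (\<integral>\<^sup>+p. F (fst p) (snd p) \<partial>distr M (S \<Otimes>\<^sub>M T) (\<lambda>\<omega>. (X \<omega>, Y \<omega>)))"
    using F by (subst nn_integral_distr) auto
  also have "\<dots> = (\<integral>\<^sup>+p. F (fst p) (snd p) \<partial>(distr M S X \<Otimes>\<^sub>M distr M T Y))"
    using indep unfolding indep_var_distribution_eq by simp
  also have "\<dots> = (\<integral>\<^sup>+x. \<integral>\<^sup>+y. F x y \<partial>distr M T Y \<partial>distr M S X)"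
    using Y.nn_integral_fst[OF F_distr] by simp
  also have "\<dots> = (\<integral>\<^sup>+\<omega>. \<integral>\<^sup>+y. F (X \<omega>) y \<partial>distr M T Y \<partial>M)"
    using Y.borel_measurable_nn_integral_fst[OF F_S] by (subst nn_integral_distr) auto
  finally show ?thesis .
qed

section \<open>Spectral calculus of the feature map\<close>

locale kernel_features =
  fixes \<rho> :: "'x measure" and \<phi> :: "'x \<Rightarrow> 'h::{real_inner,banach,second_countable_topology}"
    and lam :: "nat \<Rightarrow> real" and v :: "nat \<Rightarrow> 'h" and C :: real
  assumes prob_space_data: "prob_space \<rho>"
    and feature_measurable[measurable]: "\<phi> \<in> borel_measurable \<rho>"
    and norm_feature_square_integrable: "integrable \<rho> (\<lambda>z. (norm (\<phi> z))\<^sup>2)"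
    and eigen_system: "eigen_system \<rho> \<phi> lam v"
    and hypercontractive: "hypercontractive \<rho> \<phi> C"
    and top_eigenvalue_pos: "0 < lam 0"
begin

sublocale data: prob_space \<rho> by (rule prob_space_data)

lemma eigenvalue_nonneg: "0 \<le> lam j"
  using eigen_system unfolding eigen_system_def by auto

lemma eigenvalue_pos_iff: "0 < lam j \<longleftrightarrow> lam j \<noteq> 0"
  using eigenvalue_nonneg[of j] by auto

lemma eigenvalue_le_top: "lam j \<le> lam 0"
  using eigen_system unfolding eigen_system_def by (auto simp: antimono_def)

lemma eigenvectors_orthonormal: "0 < lam i \<Longrightarrow> 0 < lam j \<Longrightarrow> v i \<bullet> v j = (if i = j then 1 else 0)"
  using eigen_system unfolding eigen_system_def by auto

lemma cov_op_eigenvector: "cov_op \<rho> \<phi> (v j) = lam j *\<^sub>R v j"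
  using eigen_system unfolding eigen_system_def by auto

lemma cov_op_sums: "(\<lambda>j. (lam j * (u \<bullet> v j)) *\<^sub>R v j) sums cov_op \<rho> \<phi> u"
  using eigen_system unfolding eigen_system_def by auto

lemma inner_feature_measurable[measurable]:
  "(\<lambda>x. u \<bullet> \<phi> x) \<in> borel_measurable \<rho>" "(\<lambda>x. \<phi> x \<bullet> u) \<in> borel_measurable \<rho>"
  by (intro borel_measurable_inner; simp)+

lemma square_integrable_inner_feature: "square_integrable \<rho> (\<lambda>x. u \<bullet> \<phi> x)"
  unfolding square_integrable_def
proof
  show "integrable \<rho> (\<lambda>x. (u \<bullet> \<phi> x)\<^sup>2)"
  proof (rule Bochner_Integration.integrable_bound)
    show "integrable \<rho> (\<lambda>x. (norm u)\<^sup>2 * (norm (\<phi> x))\<^sup>2)"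
      using norm_feature_square_integrable by simp
    show "AE x in \<rho>. norm ((u \<bullet> \<phi> x)\<^sup>2) \<le> norm ((norm u)\<^sup>2 * (norm (\<phi> x))\<^sup>2)"
    proof (intro AE_I2)
      fix x
      have "\<bar>u \<bullet> \<phi> x\<bar>\<^sup>2 \<le> (norm u * norm (\<phi> x))\<^sup>2"
        by (intro power_mono Cauchy_Schwarz_ineq2) simp
      then show "norm ((u \<bullet> \<phi> x)\<^sup>2) \<le> norm ((norm u)\<^sup>2 * (norm (\<phi> x))\<^sup>2)"
        by (simp add: power_mult_distrib)
    qed
  qed measurable
qed measurable

lemma square_integrable_feature_coord: "square_integrable \<rho> (\<lambda>x. \<phi> x \<bullet> u)"
  using square_integrable_inner_feature[of u] by (simp add: inner_commute)

lemma integrable_cov_op_integrand: "integrable \<rho> (\<lambda>x. (u \<bullet> \<phi> x) *\<^sub>R \<phi> x)"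
proof (rule Bochner_Integration.integrable_bound)
  show "integrable \<rho> (\<lambda>x. norm u * (norm (\<phi> x))\<^sup>2)"
    using norm_feature_square_integrable by simp
  show "AE x in \<rho>. norm ((u \<bullet> \<phi> x) *\<^sub>R \<phi> x) \<le> norm (norm u * (norm (\<phi> x))\<^sup>2)"
  proof (intro AE_I2)
    fix x
    have "\<bar>u \<bullet> \<phi> x\<bar> * norm (\<phi> x) \<le> (norm u * norm (\<phi> x)) * norm (\<phi> x)"
      by (intro mult_right_mono Cauchy_Schwarz_ineq2) simp
    then show "norm ((u \<bullet> \<phi> x) *\<^sub>R \<phi> x) \<le> norm (norm u * (norm (\<phi> x))\<^sup>2)"
      by (simp add: power2_eq_square algebra_simps)
  qed
qed measurable

lemma integral_inner_feature_mult: "(\<integral>x. (u \<bullet> \<phi> x) * (w \<bullet> \<phi> x) \<partial>\<rho>) = cov_op \<rho> \<phi> u \<bullet> w"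
proof -
  have "cov_op \<rho> \<phi> u \<bullet> w = (\<integral>x. ((u \<bullet> \<phi> x) *\<^sub>R \<phi> x) \<bullet> w \<partial>\<rho>)"
    unfolding cov_op_def using integrable_cov_op_integrand by (subst integral_inner_left) auto
  then show ?thesis by (simp add: inner_commute)
qed

lemma integral_feature_coords:
  "(\<integral>x. (\<phi> x \<bullet> v i) * (\<phi> x \<bullet> v j) \<partial>\<rho>) = (if i = j then lam j else 0)"
proof -
  have left: "(\<integral>x. (\<phi> x \<bullet> v i) * (\<phi> x \<bullet> v j) \<partial>\<rho>) = lam i * (v i \<bullet> v j)"
    using integral_inner_feature_mult[of "v i" "v j"] cov_op_eigenvector[of i] by (simp add: inner_commute)
  have right: "(\<integral>x. (\<phi> x \<bullet> v i) * (\<phi> x \<bullet> v j) \<partial>\<rho>) = lam j * (v i \<bullet> v j)"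
    using integral_inner_feature_mult[of "v j" "v i"] cov_op_eigenvector[of j]
    by (simp add: inner_commute mult.commute)
  show ?thesis
    using left right eigenvectors_orthonormal[of i j] eigenvalue_nonneg[of i] eigenvalue_nonneg[of j]
    by (cases "lam i = 0"; cases "lam j = 0") auto
qed

lemma integral_feature_coord_power2: "(\<integral>x. (\<phi> x \<bullet> v j)\<^sup>2 \<partial>\<rho>) = lam j"
  using integral_feature_coords[of j j] by (simp add: power2_eq_square)

lemma inner_feature_power2_sums: "(\<lambda>i. lam i * (u \<bullet> v i)\<^sup>2) sums (\<integral>x. (u \<bullet> \<phi> x)\<^sup>2 \<partial>\<rho>)"
proof -
  have "(\<lambda>j. ((lam j * (u \<bullet> v j)) *\<^sub>R v j) \<bullet> u) sums (cov_op \<rho> \<phi> u \<bullet> u)"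
    by (rule bounded_linear.sums[OF bounded_linear_inner_left cov_op_sums])
  moreover have "cov_op \<rho> \<phi> u \<bullet> u = (\<integral>x. (u \<bullet> \<phi> x)\<^sup>2 \<partial>\<rho>)"
    using integral_inner_feature_mult[of u u] by (simp add: power2_eq_square)
  ultimately show ?thesis by (simp add: power2_eq_square inner_commute mult.assoc)
qed

text \<open>Bessel's inequality for the orthonormal eigenvectors bounds every partial trace by
  \<open>E \<parallel>\<phi>(x)\<parallel>\<^sup>2\<close>.\<close>
lemma summable_eigenvalues: "summable lam"
proof (rule summableI_nonneg_bounded[OF eigenvalue_nonneg])
  fix n
  let ?J = "{j. j < n \<and> 0 < lam j}"
  have "sum lam {..<n} = sum lam ?J"
    using eigenvalue_nonneg by (intro sum.mono_neutral_right) (auto simp: order.order_iff_strict)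
  also have "\<dots> = (\<Sum>j\<in>?J. \<integral>x. (\<phi> x \<bullet> v j)\<^sup>2 \<partial>\<rho>)"
    by (simp add: integral_feature_coord_power2)
  also have "\<dots> = (\<integral>x. (\<Sum>j\<in>?J. (\<phi> x \<bullet> v j)\<^sup>2) \<partial>\<rho>)"
    by (rule Bochner_Integration.integral_sum[symmetric])
      (simp add: square_integrable_power2[OF square_integrable_feature_coord])
  also have "\<dots> \<le> (\<integral>x. (norm (\<phi> x))\<^sup>2 \<partial>\<rho>)"
    by (intro integral_mono norm_feature_square_integrable integrable_sum bessel_inequality)
      (auto simp: square_integrable_power2[OF square_integrable_feature_coord] eigenvectors_orthonormal)
  finally show "sum lam {..<n} \<le> (\<integral>x. (norm (\<phi> x))\<^sup>2 \<partial>\<rho>)" .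
qed

lemma trace_pos: "0 < (\<Sum>j. lam j)"
proof -
  have "sum lam {..<1} \<le> (\<Sum>j. lam j)"
    by (intro sum_le_suminf summable_eigenvalues) (auto intro: eigenvalue_nonneg)
  then show ?thesis using top_eigenvalue_pos by simp
qed

text \<open>Otherwise hypercontractivity would force \<open>\<langle>v\<^sub>0, \<phi>(x)\<rangle> = 0\<close> almost surely, contradicting
  \<open>E \<langle>v\<^sub>0, \<phi>(x)\<rangle>\<^sup>2 = \<lambda>\<^sub>0 > 0\<close>.\<close>
lemma hypercontractivity_const_pos: "0 < C"
proof (rule ccontr)
  assume "\<not> 0 < C"
  then have C0: "ennreal C = 0" by (simp add: ennreal_neg)
  have "(\<integral>\<^sup>+x. ennreal ((v 0 \<bullet> \<phi> x)\<^sup>2 * (v 0 \<bullet> \<phi> x)\<^sup>2) \<partial>\<rho>)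
     \<le> ennreal C * (\<integral>\<^sup>+x. ennreal ((v 0 \<bullet> \<phi> x)\<^sup>2) \<partial>\<rho>) * (\<integral>\<^sup>+x. ennreal ((v 0 \<bullet> \<phi> x)\<^sup>2) \<partial>\<rho>)"
    using hypercontractive unfolding hypercontractive_def by blast
  also have "\<dots> = 0" by (simp only: C0 mult_zero_left)
  finally have "(\<integral>\<^sup>+x. ennreal ((v 0 \<bullet> \<phi> x)\<^sup>2 * (v 0 \<bullet> \<phi> x)\<^sup>2) \<partial>\<rho>) = 0" by simp
  then have "AE x in \<rho>. ennreal ((v 0 \<bullet> \<phi> x)\<^sup>2 * (v 0 \<bullet> \<phi> x)\<^sup>2) = 0"
    by (subst (asm) nn_integral_0_iff_AE) measurable
  then have "AE x in \<rho>. (\<phi> x \<bullet> v 0)\<^sup>2 = 0"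
  proof eventually_elim
    case (elim x)
    then have "(v 0 \<bullet> \<phi> x)\<^sup>2 * (v 0 \<bullet> \<phi> x)\<^sup>2 \<le> 0" by (simp add: ennreal_eq_0_iff)
    then show ?case by (simp add: inner_commute mult_le_0_iff)
  qed
  then have "(\<integral>x. (\<phi> x \<bullet> v 0)\<^sup>2 \<partial>\<rho>) = 0" by (rule integral_eq_zero_AE)
  then show False using top_eigenvalue_pos integral_feature_coord_power2[of 0] by simp
qed

definition feature_expansion :: "(nat \<Rightarrow> real) \<Rightarrow> nat \<Rightarrow> 'x \<Rightarrow> real" where
  "feature_expansion c n x = (\<Sum>j<n. c j * (\<phi> x \<bullet> v j))"

lemma square_integrable_feature_expansion: "square_integrable \<rho> (feature_expansion c n)"
  unfolding feature_expansion_def[abs_def]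
  by (intro square_integrable_sum square_integrable_cmult square_integrable_feature_coord)

lemma feature_expansion_eq_inner: "feature_expansion c n x = (\<Sum>j<n. c j *\<^sub>R v j) \<bullet> \<phi> x"
  unfolding feature_expansion_def inner_sum_left inner_scaleR_left by (simp add: inner_commute)

lemma feature_expansion_diff:
  "feature_expansion (\<lambda>j. c j - d j) n x = feature_expansion c n x - feature_expansion d n x"
  unfolding feature_expansion_def by (simp add: left_diff_distrib sum_subtractf)

lemma integral_feature_expansion_mult_coord:
  "(\<integral>x. feature_expansion c n x * (\<phi> x \<bullet> v j) \<partial>\<rho>) = (if j < n then c j * lam j else 0)"
proof -
  have "(\<integral>x. feature_expansion c n x * (\<phi> x \<bullet> v j) \<partial>\<rho>)
      = (\<Sum>i<n. c i * (\<integral>x. (\<phi> x \<bullet> v i) * (\<phi> x \<bullet> v j) \<partial>\<rho>))"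
    unfolding feature_expansion_def sum_distrib_right mult.assoc
    using square_integrable_mult[OF square_integrable_feature_coord square_integrable_feature_coord]
    by (subst Bochner_Integration.integral_sum) auto
  also have "\<dots> = (\<Sum>i<n. if i = j then c j * lam j else 0)"
    by (intro sum.cong refl) (simp add: integral_feature_coords)
  finally show ?thesis by simp
qed

lemma integral_feature_expansion_power2:
  "(\<integral>x. (feature_expansion c n x)\<^sup>2 \<partial>\<rho>) = (\<Sum>i<n. lam i * (c i)\<^sup>2)"
proof -
  have "(\<integral>x. (feature_expansion c n x)\<^sup>2 \<partial>\<rho>)
      = (\<integral>x. (\<Sum>i<n. c i * (feature_expansion c n x * (\<phi> x \<bullet> v i))) \<partial>\<rho>)"
    unfolding power2_eq_square by (subst (2) feature_expansion_def) (simp add: sum_distrib_left ac_simps)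
  also have "\<dots> = (\<Sum>i<n. c i * (\<integral>x. feature_expansion c n x * (\<phi> x \<bullet> v i) \<partial>\<rho>))"
    using square_integrable_mult[OF square_integrable_feature_expansion square_integrable_feature_coord]
    by (subst Bochner_Integration.integral_sum) auto
  also have "\<dots> = (\<Sum>i<n. lam i * (c i)\<^sup>2)"
    by (intro sum.cong refl) (simp add: integral_feature_expansion_mult_coord power2_eq_square)
  finally show ?thesis .
qed

text \<open>Only the eigenvectors with \<open>\<lambda>\<^sub>j > 0\<close> are assumed orthonormal, so the others are dropped.\<close>
definition spectral_coeff :: "'h \<Rightarrow> nat \<Rightarrow> real" where
  "spectral_coeff \<theta> j = (if 0 < lam j then \<theta> \<bullet> v j else 0)"

lemma spectral_expansion_tendsto:
  "(\<lambda>n. \<integral>x. (\<theta> \<bullet> \<phi> x - feature_expansion (spectral_coeff \<theta>) n x)\<^sup>2 \<partial>\<rho>) \<longlonglongrightarrow> 0"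
proof -
  define q where "q i = lam i * (\<theta> \<bullet> v i)\<^sup>2" for i
  define u where "u n = \<theta> - (\<Sum>j<n. spectral_coeff \<theta> j *\<^sub>R v j)" for n
  have u_feature: "u n \<bullet> \<phi> x = \<theta> \<bullet> \<phi> x - feature_expansion (spectral_coeff \<theta>) n x" for n x
    unfolding u_def feature_expansion_eq_inner by (simp add: inner_diff_left)
  have u_coeff: "lam i * (u n \<bullet> v i)\<^sup>2 = (if i < n then 0 else q i)" for n i
  proof (cases "lam i = 0")
    case False
    then have "0 < lam i" using eigenvalue_nonneg[of i] by simp
    then have "(\<Sum>j<n. spectral_coeff \<theta> j * (v j \<bullet> v i)) = (\<Sum>j<n. if j = i then \<theta> \<bullet> v i else 0)"
      using eigenvalue_nonneg
      by (intro sum.cong refl) (auto simp: spectral_coeff_def eigenvectors_orthonormal)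
    then have "u n \<bullet> v i = (if i < n then 0 else \<theta> \<bullet> v i)"
      unfolding u_def by (simp add: inner_diff_left inner_sum_left)
    then show ?thesis by (simp add: q_def)
  qed (simp add: q_def)
  have "summable q" unfolding q_def using inner_feature_power2_sums by (rule sums_summable)
  have "(\<lambda>i. if i \<in> {..<n} then 0 else q i) sums (suminf q + (\<Sum>i<n. 0 - q i))" for n
    by (rule sums_If_finite_set'[OF summable_sums[OF \<open>summable q\<close>]]) auto
  then have "(\<lambda>i. lam i * (u n \<bullet> v i)\<^sup>2) sums (suminf q - sum q {..<n})" for n
    by (simp add: u_coeff sum_negf)
  then have "(\<integral>x. (\<theta> \<bullet> \<phi> x - feature_expansion (spectral_coeff \<theta>) n x)\<^sup>2 \<partial>\<rho>) = suminf q - sum q {..<n}" for n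
    using inner_feature_power2_sums[of "u n"] by (simp add: u_feature sums_unique2)
  moreover have "(\<lambda>n. suminf q - sum q {..<n}) \<longlonglongrightarrow> suminf q - suminf q"
    by (intro tendsto_diff tendsto_const summable_LIMSEQ \<open>summable q\<close>)
  ultimately show ?thesis by simp
qed

lemma nn_integral_feature_expansion_mult_coord_le:
  "(\<integral>\<^sup>+x. ennreal ((feature_expansion c n x)\<^sup>2 * (\<phi> x \<bullet> v j)\<^sup>2) \<partial>\<rho>)
     \<le> ennreal (C * (\<Sum>i<n. lam i * (c i)\<^sup>2) * lam j)"
proof -
  define U where "U = (\<Sum>i<n. c i *\<^sub>R v i)"
  have U_feature: "U \<bullet> \<phi> x = feature_expansion c n x" for x
    by (simp add: U_def feature_expansion_eq_inner)
  have "(\<integral>\<^sup>+x. ennreal ((U \<bullet> \<phi> x)\<^sup>2 * (v j \<bullet> \<phi> x)\<^sup>2) \<partial>\<rho>)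
     \<le> ennreal C * (\<integral>\<^sup>+x. ennreal ((U \<bullet> \<phi> x)\<^sup>2) \<partial>\<rho>) * (\<integral>\<^sup>+x. ennreal ((v j \<bullet> \<phi> x)\<^sup>2) \<partial>\<rho>)"
    using hypercontractive unfolding hypercontractive_def by blast
  then have "(\<integral>\<^sup>+x. ennreal ((feature_expansion c n x)\<^sup>2 * (\<phi> x \<bullet> v j)\<^sup>2) \<partial>\<rho>)
     \<le> ennreal C * (\<integral>\<^sup>+x. ennreal ((feature_expansion c n x)\<^sup>2) \<partial>\<rho>) * (\<integral>\<^sup>+x. ennreal ((\<phi> x \<bullet> v j)\<^sup>2) \<partial>\<rho>)"
    by (simp only: U_feature inner_commute[of "v j"])
  also have "(\<integral>\<^sup>+x. ennreal ((feature_expansion c n x)\<^sup>2) \<partial>\<rho>) = ennreal (\<Sum>i<n. lam i * (c i)\<^sup>2)"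
    using nn_integral_power2_eq_integral[OF square_integrable_feature_expansion[of c n]]
    by (simp add: integral_feature_expansion_power2)
  also have "(\<integral>\<^sup>+x. ennreal ((\<phi> x \<bullet> v j)\<^sup>2) \<partial>\<rho>) = ennreal (lam j)"
    using nn_integral_power2_eq_integral[OF square_integrable_feature_coord[of "v j"]]
    by (simp add: integral_feature_coord_power2)
  also have "ennreal C * ennreal (\<Sum>i<n. lam i * (c i)\<^sup>2) * ennreal (lam j)
      = ennreal (C * (\<Sum>i<n. lam i * (c i)\<^sup>2) * lam j)"
    using hypercontractivity_const_pos eigenvalue_nonneg
    by (simp add: ennreal_mult sum_nonneg mult_nonneg_nonneg)
  finally show ?thesis .
qed

end

section \<open>The residual and a single SGD step\<close>

locale kernel_regression = kernel_features \<rho> \<phi> lam v C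
  for \<rho> :: "'x measure" and \<phi> :: "'x \<Rightarrow> 'h::{real_inner,banach,second_countable_topology}"
    and lam v C +
  fixes a :: "nat \<Rightarrow> real" and s :: real and fstar :: "'x \<Rightarrow> real"
  assumes target_measurable[measurable]: "fstar \<in> borel_measurable \<rho>"
    and target_expansion_tendsto: "(\<lambda>n. \<integral>\<^sup>+z. ennreal ((fstar z
          - (\<Sum>j<n. a j * lam j powr ((s - 1) / 2) * (\<phi> z \<bullet> v j)))\<^sup>2) \<partial>\<rho>) \<longlonglongrightarrow> 0"
    and initial_risk_finite: "excess_risk lam v (theta_star a lam s) 0 < \<infinity>"
begin

abbreviation tstar :: "nat \<Rightarrow> real" where
  "tstar \<equiv> theta_star a lam s"

lemma theta_star_eq_0: "lam j = 0 \<Longrightarrow> tstar j = 0"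
  by (simp add: theta_star_def)

lemma target_feature_expansion_tendsto:
  "(\<lambda>n. \<integral>\<^sup>+x. ennreal ((fstar x - feature_expansion tstar n x)\<^sup>2) \<partial>\<rho>) \<longlonglongrightarrow> 0"
  using target_expansion_tendsto by (simp add: feature_expansion_def theta_star_def)

lemma square_integrable_target: "square_integrable \<rho> fstar"
proof -
  have "eventually (\<lambda>n. (\<integral>\<^sup>+x. ennreal ((fstar x - feature_expansion tstar n x)\<^sup>2) \<partial>\<rho>) < 1) sequentially"
    using order_tendstoD(2)[OF target_feature_expansion_tendsto] by simp
  then obtain n where "(\<integral>\<^sup>+x. ennreal ((fstar x - feature_expansion tstar n x)\<^sup>2) \<partial>\<rho>) < 1"
    by (auto simp: eventually_sequentially)
  then have "square_integrable \<rho> (\<lambda>x. fstar x - feature_expansion tstar n x)"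
    using square_integrable_feature_expansion[of tstar n]
    by (intro square_integrableI_nn_integral)
      (auto simp: square_integrable_def less_trans[OF _ ennreal_one_less_top])
  from square_integrable_add[OF this square_integrable_feature_expansion[of tstar n]] show ?thesis by simp
qed

lemma target_feature_expansion_L2_tendsto:
  "(\<lambda>n. \<integral>x. (fstar x - feature_expansion tstar n x)\<^sup>2 \<partial>\<rho>) \<longlonglongrightarrow> 0"
proof -
  have "(\<lambda>n. \<integral>\<^sup>+x. ennreal ((fstar x - feature_expansion tstar n x)\<^sup>2) \<partial>\<rho>) \<longlonglongrightarrow> ennreal 0"
    using target_feature_expansion_tendsto by simp
  from tendsto_enn2real[OF this]
  have "(\<lambda>n. enn2real (\<integral>\<^sup>+x. ennreal ((fstar x - feature_expansion tstar n x)\<^sup>2) \<partial>\<rho>)) \<longlonglongrightarrow> 0"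
    by simp
  then show ?thesis
    using nn_integral_power2_eq_integral[OF square_integrable_diff[OF square_integrable_target
          square_integrable_feature_expansion]]
    by simp
qed

definition coord_error :: "'h \<Rightarrow> nat \<Rightarrow> real" where
  "coord_error \<theta> j = \<theta> \<bullet> v j - tstar j"

definition residual :: "'h \<Rightarrow> 'x \<Rightarrow> real" where
  "residual \<theta> x = \<theta> \<bullet> \<phi> x - fstar x"

definition weighted_sq_error :: "'h \<Rightarrow> real" where
  "weighted_sq_error \<theta> = (\<Sum>j. lam j * (coord_error \<theta> j)\<^sup>2)"

lemma summable_weighted_tstar: "summable (\<lambda>j. lam j * (tstar j)\<^sup>2)"
proof -
  have "(\<Sum>j. ennreal (1/2 * lam j * (tstar j)\<^sup>2)) \<noteq> \<top>"
    using initial_risk_finite by (simp add: excess_risk_def)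
  then have "summable (\<lambda>j. 1/2 * lam j * (tstar j)\<^sup>2)"
    by (intro summable_suminf_not_top) (auto intro: mult_nonneg_nonneg eigenvalue_nonneg)
  from summable_mult[OF this, of 2] show ?thesis by simp
qed

lemma summable_weighted_sq_error: "summable (\<lambda>j. lam j * (coord_error \<theta> j)\<^sup>2)"
proof (rule summable_comparison_test')
  show "summable (\<lambda>j. 2 * (lam j * (\<theta> \<bullet> v j)\<^sup>2) + 2 * (lam j * (tstar j)\<^sup>2))"
    using inner_feature_power2_sums[THEN sums_summable]
    by (intro summable_add summable_mult summable_weighted_tstar)
  fix j
  have "(coord_error \<theta> j)\<^sup>2 \<le> 2 * (\<theta> \<bullet> v j)\<^sup>2 + 2 * (tstar j)\<^sup>2"
    unfolding coord_error_def using sum_squares_ge_zero[of "\<theta> \<bullet> v j + tstar j" 0]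
    by (simp add: power2_eq_square algebra_simps)
  then have "lam j * (coord_error \<theta> j)\<^sup>2 \<le> lam j * (2 * (\<theta> \<bullet> v j)\<^sup>2 + 2 * (tstar j)\<^sup>2)"
    by (intro mult_left_mono eigenvalue_nonneg)
  then show "norm (lam j * (coord_error \<theta> j)\<^sup>2) \<le> 2 * (lam j * (\<theta> \<bullet> v j)\<^sup>2) + 2 * (lam j * (tstar j)\<^sup>2)"
    using eigenvalue_nonneg[of j] by (simp add: algebra_simps)
qed

lemma weighted_sq_error_nonneg: "0 \<le> weighted_sq_error \<theta>"
  unfolding weighted_sq_error_def
  by (intro suminf_nonneg summable_weighted_sq_error mult_nonneg_nonneg eigenvalue_nonneg zero_le_power2)

lemma excess_risk_eq_weighted_sq_error: "excess_risk lam v tstar \<theta> = ennreal (weighted_sq_error \<theta> / 2)"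
proof -
  have "excess_risk lam v tstar \<theta> = (\<Sum>j. ennreal (1/2 * (lam j * (coord_error \<theta> j)\<^sup>2)))"
    by (simp add: excess_risk_def coord_error_def mult.assoc)
  also have "\<dots> = ennreal (\<Sum>j. 1/2 * (lam j * (coord_error \<theta> j)\<^sup>2))"
    by (intro suminf_ennreal2 summable_mult summable_weighted_sq_error
        mult_nonneg_nonneg eigenvalue_nonneg zero_le_power2) simp
  finally show ?thesis
    unfolding weighted_sq_error_def by (simp add: suminf_divide[OF summable_weighted_sq_error])
qed

lemma ennreal_weighted_sq_error: "ennreal (weighted_sq_error \<theta>) = 2 * excess_risk lam v tstar \<theta>"
  using weighted_sq_error_nonneg[of \<theta>]
  by (simp add: excess_risk_eq_weighted_sq_error ennreal_mult[symmetric] ennreal_numeral[symmetric]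
      del: ennreal_numeral)

lemma excess_risk_measurable[measurable]: "excess_risk lam v tstar \<in> borel_measurable borel"
  unfolding excess_risk_def by measurable

lemma excess_risk_eq_SUP:
  "excess_risk lam v tstar \<theta> = (SUP n. \<Sum>j<n. ennreal (lam j / 2 * (coord_error \<theta> j)\<^sup>2))"
  unfolding excess_risk_def suminf_eq_SUP by (simp add: coord_error_def)

definition residual_coeff :: "'h \<Rightarrow> nat \<Rightarrow> real" where
  "residual_coeff \<theta> j = spectral_coeff \<theta> j - tstar j"

lemma residual_coeff_eq: "residual_coeff \<theta> j = (if 0 < lam j then coord_error \<theta> j else 0)"
  using eigenvalue_nonneg[of j] theta_star_eq_0[of j]
  by (auto simp: residual_coeff_def spectral_coeff_def coord_error_def)

lemma square_integrable_residual: "square_integrable \<rho> (residual \<theta>)"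
  unfolding residual_def[abs_def]
  by (intro square_integrable_diff square_integrable_inner_feature square_integrable_target)

lemma residual_expansion_L2_tendsto:
  "(\<lambda>n. \<integral>x. (residual \<theta> x - feature_expansion (residual_coeff \<theta>) n x)\<^sup>2 \<partial>\<rho>) \<longlonglongrightarrow> 0"
proof (rule tendsto_sandwich[OF _ _ tendsto_const])
  define A where "A n x = \<theta> \<bullet> \<phi> x - feature_expansion (spectral_coeff \<theta>) n x" for n x
  define B where "B n x = fstar x - feature_expansion tstar n x" for n x
  have A: "square_integrable \<rho> (A n)" and B: "square_integrable \<rho> (B n)" for n
    unfolding A_def[abs_def] B_def[abs_def]
    by (intro square_integrable_diff square_integrable_inner_feature square_integrable_target
        square_integrable_feature_expansion)+
  have split: "residual \<theta> x - feature_expansion (residual_coeff \<theta>) n x = A n x - B n x" for n x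
    by (simp add: A_def B_def residual_def residual_coeff_def[abs_def] feature_expansion_diff)
  have "(\<integral>x. (A n x - B n x)\<^sup>2 \<partial>\<rho>) \<le> (\<integral>x. 2 * (A n x)\<^sup>2 + 2 * (B n x)\<^sup>2 \<partial>\<rho>)" for n
  proof (intro integral_mono)
    show "integrable \<rho> (\<lambda>x. (A n x - B n x)\<^sup>2)"
      by (intro square_integrable_power2 square_integrable_diff A B)
    show "integrable \<rho> (\<lambda>x. 2 * (A n x)\<^sup>2 + 2 * (B n x)\<^sup>2)"
      using square_integrable_power2[OF A] square_integrable_power2[OF B] by simp
    show "(A n x - B n x)\<^sup>2 \<le> 2 * (A n x)\<^sup>2 + 2 * (B n x)\<^sup>2" for x
      using sum_squares_ge_zero[of "A n x + B n x" 0] by (simp add: power2_eq_square algebra_simps)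
  qed
  also have "(\<integral>x. 2 * (A n x)\<^sup>2 + 2 * (B n x)\<^sup>2 \<partial>\<rho>) = 2 * (\<integral>x. (A n x)\<^sup>2 \<partial>\<rho>) + 2 * (\<integral>x. (B n x)\<^sup>2 \<partial>\<rho>)" for n
    using square_integrable_power2[OF A] square_integrable_power2[OF B] by simp
  finally show "\<forall>\<^sub>F n in sequentially. (\<integral>x. (residual \<theta> x - feature_expansion (residual_coeff \<theta>) n x)\<^sup>2 \<partial>\<rho>)
      \<le> 2 * (\<integral>x. (A n x)\<^sup>2 \<partial>\<rho>) + 2 * (\<integral>x. (B n x)\<^sup>2 \<partial>\<rho>)"
    by (simp add: split)
  have "(\<lambda>n. 2 * (\<integral>x. (A n x)\<^sup>2 \<partial>\<rho>) + 2 * (\<integral>x. (B n x)\<^sup>2 \<partial>\<rho>)) \<longlonglongrightarrow> 2 * 0 + 2 * 0"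
    unfolding A_def B_def
    by (intro tendsto_add tendsto_mult_left spectral_expansion_tendsto target_feature_expansion_L2_tendsto)
  then show "(\<lambda>n. 2 * (\<integral>x. (A n x)\<^sup>2 \<partial>\<rho>) + 2 * (\<integral>x. (B n x)\<^sup>2 \<partial>\<rho>)) \<longlonglongrightarrow> 0" by simp
qed simp

lemma integral_residual_mult_coord: "(\<integral>x. residual \<theta> x * (\<phi> x \<bullet> v j) \<partial>\<rho>) = lam j * coord_error \<theta> j"
proof -
  define D where "D n = (\<integral>x. (residual \<theta> x - feature_expansion (residual_coeff \<theta>) n x) * (\<phi> x \<bullet> v j) \<partial>\<rho>)" for n
  have approx: "square_integrable \<rho> (\<lambda>x. residual \<theta> x - feature_expansion (residual_coeff \<theta>) n x)" for n
    by (intro square_integrable_diff square_integrable_residual square_integrable_feature_expansion)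
  have D_le: "(D n)\<^sup>2 \<le> (\<integral>x. (residual \<theta> x - feature_expansion (residual_coeff \<theta>) n x)\<^sup>2 \<partial>\<rho>) * lam j" for n
    using Cauchy_Schwarz_integral[OF approx square_integrable_feature_coord[of "v j"]]
    by (simp add: D_def integral_feature_coord_power2)
  have "(\<lambda>n. (D n)\<^sup>2) \<longlonglongrightarrow> 0"
  proof (rule tendsto_sandwich[OF _ _ tendsto_const])
    show "\<forall>\<^sub>F n in sequentially. (D n)\<^sup>2 \<le> (\<integral>x. (residual \<theta> x - feature_expansion (residual_coeff \<theta>) n x)\<^sup>2 \<partial>\<rho>) * lam j"
      using D_le by simp
    show "(\<lambda>n. (\<integral>x. (residual \<theta> x - feature_expansion (residual_coeff \<theta>) n x)\<^sup>2 \<partial>\<rho>) * lam j) \<longlonglongrightarrow> 0"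
      using tendsto_mult_left_zero[OF residual_expansion_L2_tendsto] by simp
  qed simp
  then have "D \<longlonglongrightarrow> 0" by (rule tendsto_zero_if_power2_tendsto_zero)
  moreover have "(\<lambda>n. if j < n then residual_coeff \<theta> j * lam j else 0) \<longlonglongrightarrow> residual_coeff \<theta> j * lam j"
    by (intro tendsto_eventually eventually_mono[OF eventually_gt_at_top[of j]]) simp
  ultimately have "(\<lambda>n. D n + (if j < n then residual_coeff \<theta> j * lam j else 0)) \<longlonglongrightarrow> 0 + residual_coeff \<theta> j * lam j"
    by (rule tendsto_add)
  moreover have "(\<integral>x. residual \<theta> x * (\<phi> x \<bullet> v j) \<partial>\<rho>) = D n + (if j < n then residual_coeff \<theta> j * lam j else 0)" for n
    unfolding D_def left_diff_distrib
    by (subst Bochner_Integration.integral_diff)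
      (auto intro!: square_integrable_mult square_integrable_residual square_integrable_feature_expansion
        square_integrable_feature_coord simp: integral_feature_expansion_mult_coord)
  ultimately have "(\<lambda>n. \<integral>x. residual \<theta> x * (\<phi> x \<bullet> v j) \<partial>\<rho>) \<longlonglongrightarrow> residual_coeff \<theta> j * lam j"
    by simp
  then show ?thesis
    using eigenvalue_nonneg[of j] by (auto simp: LIMSEQ_const_iff residual_coeff_eq)
qed

lemma nn_integral_residual_mult_coord_le:
  "(\<integral>\<^sup>+x. ennreal ((residual \<theta> x)\<^sup>2 * (\<phi> x \<bullet> v j)\<^sup>2) \<partial>\<rho>) \<le> ennreal (C * weighted_sq_error \<theta> * lam j)"
proof (rule nn_integral_power2_mult_le_of_approx)
  show "square_integrable \<rho> (\<lambda>x. residual \<theta> x - feature_expansion (residual_coeff \<theta>) n x)" for n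
    by (intro square_integrable_diff square_integrable_residual square_integrable_feature_expansion)
  show "feature_expansion (residual_coeff \<theta>) n \<in> borel_measurable \<rho>" for n
    using square_integrable_feature_expansion by (rule square_integrable_measurable)
  have partial_le: "(\<Sum>i<n. lam i * (residual_coeff \<theta> i)\<^sup>2) \<le> weighted_sq_error \<theta>" for n
  proof -
    have "(\<Sum>i<n. lam i * (residual_coeff \<theta> i)\<^sup>2) = (\<Sum>i<n. lam i * (coord_error \<theta> i)\<^sup>2)"
      by (intro sum.cong refl) (simp add: residual_coeff_eq eigenvalue_pos_iff)
    also have "\<dots> \<le> weighted_sq_error \<theta>"
      unfolding weighted_sq_error_def
      by (intro sum_le_suminf summable_weighted_sq_error) (auto intro: mult_nonneg_nonneg eigenvalue_nonneg)
    finally show ?thesis .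
  qed
  show "(\<integral>\<^sup>+x. ennreal ((feature_expansion (residual_coeff \<theta>) n x)\<^sup>2 * (\<phi> x \<bullet> v j)\<^sup>2) \<partial>\<rho>)
      \<le> ennreal (C * weighted_sq_error \<theta> * lam j)" for n
    using hypercontractivity_const_pos eigenvalue_nonneg[of j]
    by (intro order_trans[OF nn_integral_feature_expansion_mult_coord_le] ennreal_leI
        mult_right_mono mult_left_mono partial_le) auto
  show "(\<lambda>n. \<integral>x. (residual \<theta> x - feature_expansion (residual_coeff \<theta>) n x)\<^sup>2 \<partial>\<rho>) \<longlonglongrightarrow> 0"
    by (rule residual_expansion_L2_tendsto)
qed measurable

lemma square_integrable_residual_mult_coord: "square_integrable \<rho> (\<lambda>x. residual \<theta> x * (\<phi> x \<bullet> v j))"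
proof (rule square_integrableI_nn_integral)
  show "(\<lambda>x. residual \<theta> x * (\<phi> x \<bullet> v j)) \<in> borel_measurable \<rho>"
    using square_integrable_measurable[OF square_integrable_residual] by measurable
  have "(\<integral>\<^sup>+x. ennreal ((residual \<theta> x * (\<phi> x \<bullet> v j))\<^sup>2) \<partial>\<rho>) \<le> ennreal (C * weighted_sq_error \<theta> * lam j)"
    using nn_integral_residual_mult_coord_le by (simp add: power_mult_distrib)
  then show "(\<integral>\<^sup>+x. ennreal ((residual \<theta> x * (\<phi> x \<bullet> v j))\<^sup>2) \<partial>\<rho>) < \<infinity>"
    using le_less_trans by fastforce
qed

lemma integral_residual_mult_coord_power2_le:
  "(\<integral>x. (residual \<theta> x * (\<phi> x \<bullet> v j))\<^sup>2 \<partial>\<rho>) \<le> C * weighted_sq_error \<theta> * lam j"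
proof -
  have "ennreal (\<integral>x. (residual \<theta> x * (\<phi> x \<bullet> v j))\<^sup>2 \<partial>\<rho>) \<le> ennreal (C * weighted_sq_error \<theta> * lam j)"
    using nn_integral_residual_mult_coord_le
      nn_integral_power2_eq_integral[OF square_integrable_residual_mult_coord]
    by (simp add: power_mult_distrib)
  then show ?thesis
    using hypercontractivity_const_pos weighted_sq_error_nonneg[of \<theta>] eigenvalue_nonneg[of j]
    by (subst (asm) ennreal_le_iff) auto
qed

text \<open>The drift \<open>E[residual \<theta> x \<cdot> \<langle>\<phi>(x), v\<^sub>j\<rangle>] = \<lambda>\<^sub>j d\<^sub>j\<close> contracts the \<open>j\<close>-th error;
  its fluctuation is controlled by hypercontractivity.\<close>
lemma integral_coord_drift_power2_le:
  "(\<integral>x. (coord_error \<theta> j - \<eta> * (residual \<theta> x * (\<phi> x \<bullet> v j)))\<^sup>2 \<partial>\<rho>)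
     \<le> (1 - \<eta> * lam j)\<^sup>2 * (coord_error \<theta> j)\<^sup>2 + \<eta>\<^sup>2 * (C * weighted_sq_error \<theta> * lam j)"
proof -
  let ?d = "coord_error \<theta> j" and ?g = "\<lambda>x. residual \<theta> x * (\<phi> x \<bullet> v j)"
  have "(\<integral>x. (?d - \<eta> * ?g x)\<^sup>2 \<partial>\<rho>) = (\<integral>x. ?d\<^sup>2 - (2 * \<eta> * ?d) * ?g x + \<eta>\<^sup>2 * (?g x)\<^sup>2 \<partial>\<rho>)"
    by (intro Bochner_Integration.integral_cong refl) (simp add: power2_eq_square algebra_simps)
  also have "\<dots> = ?d\<^sup>2 - (2 * \<eta> * ?d) * (\<integral>x. ?g x \<partial>\<rho>) + \<eta>\<^sup>2 * (\<integral>x. (?g x)\<^sup>2 \<partial>\<rho>)"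
    using square_integrable_mult[OF square_integrable_residual square_integrable_feature_coord]
      square_integrable_power2[OF square_integrable_residual_mult_coord]
    by (simp add: data.prob_space)
  also have "\<dots> = (1 - \<eta> * lam j)\<^sup>2 * ?d\<^sup>2 - (\<eta> * lam j * ?d)\<^sup>2 + \<eta>\<^sup>2 * (\<integral>x. (?g x)\<^sup>2 \<partial>\<rho>)"
    unfolding integral_residual_mult_coord by (simp add: power2_eq_square algebra_simps)
  also have "\<dots> \<le> (1 - \<eta> * lam j)\<^sup>2 * ?d\<^sup>2 + \<eta>\<^sup>2 * (C * weighted_sq_error \<theta> * lam j)"
    using mult_left_mono[OF integral_residual_mult_coord_power2_le[of \<theta> j] zero_le_power2[of \<eta>]]
      zero_le_power2[of "\<eta> * lam j * ?d"]
    by linarith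
  finally show ?thesis .
qed

definition sgd_step :: "real \<Rightarrow> 'h \<Rightarrow> 'x \<Rightarrow> real \<Rightarrow> 'h" where
  "sgd_step \<eta> \<theta> x e = \<theta> - (\<eta> * (\<theta> \<bullet> \<phi> x - (fstar x + e))) *\<^sub>R \<phi> x"

lemma coord_error_sgd_step:
  "coord_error (sgd_step \<eta> \<theta> x e) j
     = (coord_error \<theta> j - \<eta> * (residual \<theta> x * (\<phi> x \<bullet> v j))) + (\<eta> * (\<phi> x \<bullet> v j)) * e"
  by (simp add: sgd_step_def coord_error_def residual_def inner_diff_left algebra_simps)

lemma nn_integral_coord_error_sgd_step_le:
  assumes "0 < \<sigma>"
  shows "(\<integral>\<^sup>+z. ennreal ((coord_error (sgd_step \<eta> \<theta> (fst z) (snd z)) j)\<^sup>2)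
            \<partial>(\<rho> \<Otimes>\<^sub>M density lborel (normal_density 0 \<sigma>)))
     \<le> ennreal ((1 - \<eta> * lam j)\<^sup>2 * (coord_error \<theta> j)\<^sup>2 + \<eta>\<^sup>2 * (C * weighted_sq_error \<theta> + \<sigma>\<^sup>2) * lam j)"
proof -
  let ?N = "density lborel (normal_density 0 \<sigma>)"
  interpret noise: prob_space ?N by (rule prob_space_normal_density[OF assms])
  define A where "A x = coord_error \<theta> j - \<eta> * (residual \<theta> x * (\<phi> x \<bullet> v j))" for x
  define c where "c x = \<eta> * (\<phi> x \<bullet> v j)" for x
  have A: "square_integrable \<rho> A"
    unfolding A_def[abs_def]
    by (intro square_integrable_diff data.square_integrable_const square_integrable_cmult
        square_integrable_residual_mult_coord)
  have c: "square_integrable \<rho> c"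
    unfolding c_def[abs_def] by (intro square_integrable_cmult square_integrable_feature_coord)
  note [measurable] = square_integrable_measurable[OF A] square_integrable_measurable[OF c]
  have "(\<integral>\<^sup>+z. ennreal ((coord_error (sgd_step \<eta> \<theta> (fst z) (snd z)) j)\<^sup>2) \<partial>(\<rho> \<Otimes>\<^sub>M ?N))
      = (\<integral>\<^sup>+z. ennreal ((A (fst z) + c (fst z) * snd z)\<^sup>2) \<partial>(\<rho> \<Otimes>\<^sub>M ?N))"
    by (simp add: coord_error_sgd_step A_def c_def)
  also have "\<dots> = (\<integral>\<^sup>+x. \<integral>\<^sup>+e. ennreal ((A (fst (x, e)) + c (fst (x, e)) * snd (x, e))\<^sup>2) \<partial>?N \<partial>\<rho>)"
    by (rule noise.nn_integral_fst[symmetric]) measurable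
  also have "\<dots> = (\<integral>\<^sup>+x. ennreal ((A x)\<^sup>2 + (c x)\<^sup>2 * \<sigma>\<^sup>2) \<partial>\<rho>)"
    by (simp add: nn_integral_normal_density_affine_power2[OF assms])
  also have "\<dots> = ennreal (\<integral>x. (A x)\<^sup>2 + (c x)\<^sup>2 * \<sigma>\<^sup>2 \<partial>\<rho>)"
    using square_integrable_power2[OF A] square_integrable_power2[OF c]
    by (intro nn_integral_eq_integral) auto
  also have "(\<integral>x. (A x)\<^sup>2 + (c x)\<^sup>2 * \<sigma>\<^sup>2 \<partial>\<rho>) = (\<integral>x. (A x)\<^sup>2 \<partial>\<rho>) + \<eta>\<^sup>2 * \<sigma>\<^sup>2 * lam j"
  proof -
    have "(\<integral>x. (c x)\<^sup>2 \<partial>\<rho>) = \<eta>\<^sup>2 * lam j"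
      by (simp add: c_def power_mult_distrib integral_feature_coord_power2)
    then show ?thesis
      using square_integrable_power2[OF A] square_integrable_power2[OF c] by simp
  qed
  also have "\<dots> \<le> ennreal ((1 - \<eta> * lam j)\<^sup>2 * (coord_error \<theta> j)\<^sup>2 + \<eta>\<^sup>2 * (C * weighted_sq_error \<theta> + \<sigma>\<^sup>2) * lam j)"
    using integral_coord_drift_power2_le[of \<theta> j \<eta>] unfolding A_def
    by (intro ennreal_leI) (simp add: algebra_simps)
  finally show ?thesis .
qed

lemma nn_integral_weighted_coord_error_sgd_step_le:
  assumes "0 < \<sigma>" and \<alpha>: "\<And>j. 0 \<le> \<alpha> j"
  shows "(\<integral>\<^sup>+z. (\<Sum>j<n. ennreal (\<alpha> j * (coord_error (sgd_step \<eta> \<theta> (fst z) (snd z)) j)\<^sup>2))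
            \<partial>(\<rho> \<Otimes>\<^sub>M density lborel (normal_density 0 \<sigma>)))
     \<le> ennreal (\<Sum>j<n. \<alpha> j * ((1 - \<eta> * lam j)\<^sup>2 * (coord_error \<theta> j)\<^sup>2
                              + \<eta>\<^sup>2 * (C * weighted_sq_error \<theta> + \<sigma>\<^sup>2) * lam j))"
proof -
  let ?M = "\<rho> \<Otimes>\<^sub>M density lborel (normal_density 0 \<sigma>)"
  let ?b = "\<lambda>j. (1 - \<eta> * lam j)\<^sup>2 * (coord_error \<theta> j)\<^sup>2 + \<eta>\<^sup>2 * (C * weighted_sq_error \<theta> + \<sigma>\<^sup>2) * lam j"
  have b_nonneg: "0 \<le> ?b j" for j
    using hypercontractivity_const_pos weighted_sq_error_nonneg[of \<theta>] eigenvalue_nonneg[of j]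
    by (intro add_nonneg_nonneg mult_nonneg_nonneg) auto
  have "(\<integral>\<^sup>+z. (\<Sum>j<n. ennreal (\<alpha> j * (coord_error (sgd_step \<eta> \<theta> (fst z) (snd z)) j)\<^sup>2)) \<partial>?M)
      = (\<Sum>j<n. ennreal (\<alpha> j) * \<integral>\<^sup>+z. ennreal ((coord_error (sgd_step \<eta> \<theta> (fst z) (snd z)) j)\<^sup>2) \<partial>?M)"
    unfolding coord_error_def sgd_step_def using \<alpha>
    by (subst nn_integral_sum) (auto simp: ennreal_mult nn_integral_cmult)
  also have "\<dots> \<le> (\<Sum>j<n. ennreal (\<alpha> j) * ennreal (?b j))"
    by (intro sum_mono mult_left_mono nn_integral_coord_error_sgd_step_le assms) simp
  also have "\<dots> = (\<Sum>j<n. ennreal (\<alpha> j * ?b j))"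
    using \<alpha> b_nonneg by (simp add: ennreal_mult)
  also have "\<dots> = ennreal (\<Sum>j<n. \<alpha> j * ?b j)"
    using \<alpha> b_nonneg by (intro sum_ennreal mult_nonneg_nonneg)
  finally show ?thesis .
qed

lemma ennreal_weighted_step_bound_split:
  assumes \<alpha>: "\<And>j. 0 \<le> \<alpha> j"
  shows "ennreal (\<Sum>j<n. \<alpha> j * ((1 - \<eta> * lam j)\<^sup>2 * (coord_error \<theta> j)\<^sup>2
        + \<eta>\<^sup>2 * (C * weighted_sq_error \<theta> + \<sigma>\<^sup>2) * lam j))
      = (\<Sum>j<n. ennreal (\<alpha> j * (1 - \<eta> * lam j)\<^sup>2 * (coord_error \<theta> j)\<^sup>2))
        + ennreal (\<eta>\<^sup>2 * C * (\<Sum>j<n. \<alpha> j * lam j)) * (2 * excess_risk lam v tstar \<theta>)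
        + ennreal (\<eta>\<^sup>2 * \<sigma>\<^sup>2 * (\<Sum>j<n. \<alpha> j * lam j))"
proof -
  let ?X = "\<Sum>j<n. \<alpha> j * (1 - \<eta> * lam j)\<^sup>2 * (coord_error \<theta> j)\<^sup>2" and ?S = "\<Sum>j<n. \<alpha> j * lam j"
  have "0 \<le> ?S" using \<alpha> eigenvalue_nonneg by (intro sum_nonneg mult_nonneg_nonneg)
  have "(\<Sum>j<n. \<alpha> j * ((1 - \<eta> * lam j)\<^sup>2 * (coord_error \<theta> j)\<^sup>2
        + \<eta>\<^sup>2 * (C * weighted_sq_error \<theta> + \<sigma>\<^sup>2) * lam j))
      = ?X + \<eta>\<^sup>2 * C * ?S * weighted_sq_error \<theta> + \<eta>\<^sup>2 * \<sigma>\<^sup>2 * ?S"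
    by (simp add: sum.distrib sum_distrib_left sum_distrib_right algebra_simps)
  moreover have "ennreal (?X + \<eta>\<^sup>2 * C * ?S * weighted_sq_error \<theta> + \<eta>\<^sup>2 * \<sigma>\<^sup>2 * ?S)
      = ennreal ?X + ennreal (\<eta>\<^sup>2 * C * ?S) * ennreal (weighted_sq_error \<theta>) + ennreal (\<eta>\<^sup>2 * \<sigma>\<^sup>2 * ?S)"
    using \<alpha> \<open>0 \<le> ?S\<close> hypercontractivity_const_pos weighted_sq_error_nonneg[of \<theta>]
    by (simp add: sum_nonneg ennreal_plus[symmetric] ennreal_mult[symmetric] del: ennreal_plus)
  moreover have "ennreal ?X = (\<Sum>j<n. ennreal (\<alpha> j * (1 - \<eta> * lam j)\<^sup>2 * (coord_error \<theta> j)\<^sup>2))"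
    using \<alpha> by (intro sum_ennreal[symmetric]) simp
  ultimately show ?thesis by (simp add: ennreal_weighted_sq_error)
qed

end

section \<open>The SGD iterates\<close>

locale kernel_sgd = kernel_regression \<rho> \<phi> lam v C a s fstar
  for \<rho> :: "'x measure" and \<phi> :: "'x \<Rightarrow> 'h::{real_inner,banach,second_countable_topology}"
    and lam v C a s fstar +
  fixes P :: "'w measure" and xs :: "nat \<Rightarrow> 'w \<Rightarrow> 'x" and eps :: "nat \<Rightarrow> 'w \<Rightarrow> real"
    and \<sigma> :: real and \<eta> :: "nat \<Rightarrow> real"
  assumes prob_space_samples: "prob_space P"
    and noise_level_pos: "0 < \<sigma>"
    and samples_indep: "prob_space.indep_vars P (\<lambda>_. \<rho> \<Otimes>\<^sub>M borel) (\<lambda>k w. (xs k w, eps k w)) UNIV"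
    and sample_distr: "\<And>k. distr P (\<rho> \<Otimes>\<^sub>M borel) (\<lambda>w. (xs k w, eps k w))
                          = \<rho> \<Otimes>\<^sub>M density lborel (normal_density 0 \<sigma>)"
begin

sublocale samples: prob_space P by (rule prob_space_samples)

definition sample :: "nat \<Rightarrow> 'w \<Rightarrow> 'x \<times> real" where
  "sample k w = (xs k w, eps k w)"

definition iterate :: "nat \<Rightarrow> 'w \<Rightarrow> 'h" where
  "iterate k w = sgd_iter \<eta> \<phi> (\<lambda>i. xs i w) (\<lambda>i. fstar (xs i w) + eps i w) k"

definition iterate_of_samples :: "nat \<Rightarrow> (nat \<Rightarrow> 'x \<times> real) \<Rightarrow> 'h" where
  "iterate_of_samples k t = sgd_iter \<eta> \<phi> (\<lambda>i. fst (t i)) (\<lambda>i. fstar (fst (t i)) + snd (t i)) k"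

lemma iterate_Suc: "iterate (Suc k) w = sgd_step (\<eta> k) (iterate k w) (xs k w) (eps k w)"
  by (simp add: iterate_def sgd_step_def)

lemma iterate_eq_iterate_of_samples: "iterate k w = iterate_of_samples k (restrict (\<lambda>i. sample i w) {..<k})"
  unfolding iterate_def iterate_of_samples_def by (rule sgd_iter_cong) (auto simp: sample_def)

lemma iterate_of_samples_measurable:
  "{..<k} \<subseteq> I \<Longrightarrow> iterate_of_samples k \<in> borel_measurable (PiM I (\<lambda>_. \<rho> \<Otimes>\<^sub>M borel))"
proof (induction k)
  case (Suc k)
  then have "{..<k} \<subseteq> I" "k \<in> I" by auto
  then have [measurable]: "iterate_of_samples k \<in> borel_measurable (PiM I (\<lambda>_. \<rho> \<Otimes>\<^sub>M borel))"
    and [measurable]: "(\<lambda>t. t k) \<in> measurable (PiM I (\<lambda>_. \<rho> \<Otimes>\<^sub>M borel)) (\<rho> \<Otimes>\<^sub>M borel)"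
    by (auto intro!: Suc.IH measurable_component_singleton)
  have "iterate_of_samples (Suc k) = (\<lambda>t. iterate_of_samples k t
      - (\<eta> k * (iterate_of_samples k t \<bullet> \<phi> (fst (t k)) - (fstar (fst (t k)) + snd (t k)))) *\<^sub>R \<phi> (fst (t k)))"
    by (rule ext) (simp add: iterate_of_samples_def)
  then show ?case by simp
qed (simp add: iterate_of_samples_def[abs_def])

lemma indep_past_current:
  "samples.indep_var (PiM {..<k} (\<lambda>_. \<rho> \<Otimes>\<^sub>M borel)) (\<lambda>w. restrict (\<lambda>i. sample i w) {..<k})
     (PiM {k} (\<lambda>_. \<rho> \<Otimes>\<^sub>M borel)) (\<lambda>w. restrict (\<lambda>i. sample i w) {k})"
  using samples_indep unfolding sample_def[abs_def] by (intro samples.indep_var_restrict) auto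

lemma iterate_measurable[measurable]: "iterate k \<in> borel_measurable P"
  using measurable_compose[OF samples.indep_var_rv1[OF indep_past_current]
      iterate_of_samples_measurable[OF order_refl]]
  by (simp add: iterate_eq_iterate_of_samples[abs_def])

lemma sample_measurable[measurable]: "sample k \<in> measurable P (\<rho> \<Otimes>\<^sub>M borel)"
  using measurable_compose[OF samples.indep_var_rv2[OF indep_past_current]
      measurable_component_singleton[of k "{k}"]]
  by simp

text \<open>The iterate \<open>\<theta>\<^sub>k\<close> depends only on the first \<open>k\<close> samples, hence is independent of the
  \<open>k\<close>-th one, which can therefore be integrated out first. Since \<open>indep_var\<close>
  requires both variables to have the same type, independence is taken between the restrictions
  of the sample sequence to \<open>{..<k}\<close> and to \<open>{k}\<close>.\<close>
lemma nn_integral_iterate_sample: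
  assumes F: "(\<lambda>p. F (fst p) (snd p)) \<in> borel_measurable (borel \<Otimes>\<^sub>M (\<rho> \<Otimes>\<^sub>M borel))"
  shows "(\<integral>\<^sup>+w. F (iterate k w) (sample k w) \<partial>P)
     = (\<integral>\<^sup>+w. (\<integral>\<^sup>+z. F (iterate k w) z \<partial>(\<rho> \<Otimes>\<^sub>M density lborel (normal_density 0 \<sigma>))) \<partial>P)"
proof -
  let ?cur = "\<lambda>w. restrict (\<lambda>i. sample i w) {k}"
  let ?B = "PiM {k} (\<lambda>_. \<rho> \<Otimes>\<^sub>M borel)"
  have [measurable]: "?cur \<in> measurable P ?B"
    using samples.indep_var_rv2[OF indep_past_current] .
  have F_at: "F \<theta> \<in> borel_measurable (\<rho> \<Otimes>\<^sub>M borel)" for \<theta>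
    using measurable_Pair2[OF F, of \<theta>] by simp
  have "(\<lambda>p. (iterate_of_samples k (fst p), snd p k))
      \<in> measurable (PiM {..<k} (\<lambda>_. \<rho> \<Otimes>\<^sub>M borel) \<Otimes>\<^sub>M ?B) (borel \<Otimes>\<^sub>M (\<rho> \<Otimes>\<^sub>M borel))"
    by (intro measurable_Pair measurable_compose[OF measurable_fst iterate_of_samples_measurable[OF order_refl]]
        measurable_compose[OF measurable_snd measurable_component_singleton]) simp
  from measurable_compose[OF this F]
  have "(\<lambda>p. F (iterate_of_samples k (fst p)) (snd p k))
      \<in> borel_measurable (PiM {..<k} (\<lambda>_. \<rho> \<Otimes>\<^sub>M borel) \<Otimes>\<^sub>M ?B)"
    by simp
  from samples.nn_integral_indep_var[OF indep_past_current this]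
  have "(\<integral>\<^sup>+w. F (iterate k w) (sample k w) \<partial>P)
      = (\<integral>\<^sup>+w. (\<integral>\<^sup>+t. F (iterate k w) (t k) \<partial>distr P ?B ?cur) \<partial>P)"
    unfolding iterate_eq_iterate_of_samples by (simp only: restrict_apply' singletonI)
  also have "\<dots> = (\<integral>\<^sup>+w. (\<integral>\<^sup>+z. F (iterate k w) z \<partial>distr P (\<rho> \<Otimes>\<^sub>M borel) (sample k)) \<partial>P)"
    using F_at by (simp add: nn_integral_distr)
  finally show ?thesis
    using sample_distr by (simp add: sample_def[abs_def])
qed

definition expected_weighted_error :: "nat \<Rightarrow> (nat \<Rightarrow> real) \<Rightarrow> nat \<Rightarrow> ennreal" where
  "expected_weighted_error k \<alpha> n = (\<integral>\<^sup>+w. (\<Sum>j<n. ennreal (\<alpha> j * (coord_error (iterate k w) j)\<^sup>2)) \<partial>P)"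

lemma coord_error_iterate_measurable[measurable]: "(\<lambda>w. coord_error (iterate k w) j) \<in> borel_measurable P"
  unfolding coord_error_def by measurable

lemma expected_weighted_error_0: "expected_weighted_error 0 \<alpha> n = (\<Sum>j<n. ennreal (\<alpha> j * (tstar j)\<^sup>2))"
  by (simp add: expected_weighted_error_def iterate_def coord_error_def samples.emeasure_space_1)

lemma expected_weighted_error_Suc_le_integral:
  assumes "\<And>j. 0 \<le> \<alpha> j"
  shows "expected_weighted_error (Suc k) \<alpha> n
     \<le> (\<integral>\<^sup>+w. ennreal (\<Sum>j<n. \<alpha> j * ((1 - \<eta> k * lam j)\<^sup>2 * (coord_error (iterate k w) j)\<^sup>2
           + (\<eta> k)\<^sup>2 * (C * weighted_sq_error (iterate k w) + \<sigma>\<^sup>2) * lam j)) \<partial>P)"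
proof -
  let ?F = "\<lambda>\<theta> z. \<Sum>j<n. ennreal (\<alpha> j * (coord_error (sgd_step (\<eta> k) \<theta> (fst z) (snd z)) j)\<^sup>2)"
  have "expected_weighted_error (Suc k) \<alpha> n = (\<integral>\<^sup>+w. ?F (iterate k w) (sample k w) \<partial>P)"
    by (simp add: expected_weighted_error_def iterate_Suc sample_def)
  also have "\<dots> = (\<integral>\<^sup>+w. \<integral>\<^sup>+z. ?F (iterate k w) z \<partial>(\<rho> \<Otimes>\<^sub>M density lborel (normal_density 0 \<sigma>)) \<partial>P)"
    by (rule nn_integral_iterate_sample) (unfold coord_error_def sgd_step_def, measurable)
  also have "\<dots> \<le> (\<integral>\<^sup>+w. ennreal (\<Sum>j<n. \<alpha> j * ((1 - \<eta> k * lam j)\<^sup>2 * (coord_error (iterate k w) j)\<^sup>2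
           + (\<eta> k)\<^sup>2 * (C * weighted_sq_error (iterate k w) + \<sigma>\<^sup>2) * lam j)) \<partial>P)"
    by (intro nn_integral_mono nn_integral_weighted_coord_error_sgd_step_le noise_level_pos assms)
  finally show ?thesis .
qed

lemma expected_weighted_error_Suc_le:
  assumes \<alpha>: "\<And>j. 0 \<le> \<alpha> j" and "0 \<le> K"
    and risk: "(\<integral>\<^sup>+w. excess_risk lam v tstar (iterate k w) \<partial>P) \<le> ennreal K"
  shows "expected_weighted_error (Suc k) \<alpha> n
     \<le> expected_weighted_error k (\<lambda>j. \<alpha> j * (1 - \<eta> k * lam j)\<^sup>2) n
        + ennreal ((\<eta> k)\<^sup>2 * (2 * C * K + \<sigma>\<^sup>2) * (\<Sum>j<n. \<alpha> j * lam j))"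
proof -
  let ?S = "\<Sum>j<n. \<alpha> j * lam j"
  have "0 \<le> ?S" using \<alpha> eigenvalue_nonneg by (intro sum_nonneg mult_nonneg_nonneg)
  have C: "0 \<le> C" using hypercontractivity_const_pos by simp
  have "expected_weighted_error (Suc k) \<alpha> n
      \<le> (\<integral>\<^sup>+w. ennreal (\<Sum>j<n. \<alpha> j * ((1 - \<eta> k * lam j)\<^sup>2 * (coord_error (iterate k w) j)\<^sup>2
           + (\<eta> k)\<^sup>2 * (C * weighted_sq_error (iterate k w) + \<sigma>\<^sup>2) * lam j)) \<partial>P)"
    by (rule expected_weighted_error_Suc_le_integral) (rule \<alpha>)
  also have "\<dots> = expected_weighted_error k (\<lambda>j. \<alpha> j * (1 - \<eta> k * lam j)\<^sup>2) n
        + ennreal ((\<eta> k)\<^sup>2 * C * ?S) * (2 * (\<integral>\<^sup>+w. excess_risk lam v tstar (iterate k w) \<partial>P))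
        + ennreal ((\<eta> k)\<^sup>2 * \<sigma>\<^sup>2 * ?S)"
    unfolding ennreal_weighted_step_bound_split[OF \<alpha>] expected_weighted_error_def
    by (simp add: nn_integral_add nn_integral_cmult samples.emeasure_space_1 mult.assoc)
  also have "\<dots> \<le> expected_weighted_error k (\<lambda>j. \<alpha> j * (1 - \<eta> k * lam j)\<^sup>2) n
        + (ennreal ((\<eta> k)\<^sup>2 * C * ?S) * (2 * ennreal K) + ennreal ((\<eta> k)\<^sup>2 * \<sigma>\<^sup>2 * ?S))"
    unfolding add.assoc by (intro add_mono mult_left_mono risk order_refl) auto
  also have "ennreal ((\<eta> k)\<^sup>2 * C * ?S) * (2 * ennreal K) + ennreal ((\<eta> k)\<^sup>2 * \<sigma>\<^sup>2 * ?S)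
      = ennreal ((\<eta> k)\<^sup>2 * (2 * C * K + \<sigma>\<^sup>2) * ?S)"
  proof -
    have "ennreal ((\<eta> k)\<^sup>2 * C * ?S) * (2 * ennreal K) = ennreal ((\<eta> k)\<^sup>2 * C * ?S * (2 * K))"
      using \<open>0 \<le> ?S\<close> C \<open>0 \<le> K\<close>
      by (simp add: ennreal_mult ennreal_numeral[symmetric] del: ennreal_numeral)
    then show ?thesis
      using \<open>0 \<le> ?S\<close> C \<open>0 \<le> K\<close> by (simp add: ennreal_plus[symmetric] algebra_simps del: ennreal_plus)
  qed
  finally show ?thesis .
qed

definition contraction :: "nat \<Rightarrow> nat \<Rightarrow> nat \<Rightarrow> real" where
  "contraction u k j = (\<Prod>i\<in>{u..<k}. (1 - \<eta> i * lam j)\<^sup>2)"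

text \<open>Unrolling the recursion: the initial errors \<open>d\<^sub>j(\<theta>\<^sub>0) = -\<theta>\<^sup>*\<^sub>j\<close> are damped by all steps, the noise
  injected at step \<open>t\<close> only by the later ones.\<close>
definition unrolled_bound :: "real \<Rightarrow> nat \<Rightarrow> (nat \<Rightarrow> real) \<Rightarrow> nat \<Rightarrow> real" where
  "unrolled_bound K k \<alpha> n = (\<Sum>j<n. \<alpha> j * contraction 0 k j * (tstar j)\<^sup>2)
     + (2 * C * K + \<sigma>\<^sup>2) * (\<Sum>t<k. (\<eta> t)\<^sup>2 * (\<Sum>j<n. \<alpha> j * lam j * contraction (Suc t) k j))"

lemma contraction_Suc: "u \<le> k \<Longrightarrow> contraction u (Suc k) j = contraction u k j * (1 - \<eta> k * lam j)\<^sup>2"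
  unfolding contraction_def by (rule prod.atLeastLessThan_Suc)

lemma unrolled_bound_Suc:
  "unrolled_bound K (Suc k) \<alpha> n = unrolled_bound K k (\<lambda>j. \<alpha> j * (1 - \<eta> k * lam j)\<^sup>2) n
     + (2 * C * K + \<sigma>\<^sup>2) * ((\<eta> k)\<^sup>2 * (\<Sum>j<n. \<alpha> j * lam j))"
proof -
  have "(\<Sum>t<k. (\<eta> t)\<^sup>2 * (\<Sum>j<n. \<alpha> j * lam j * contraction (Suc t) (Suc k) j))
      = (\<Sum>t<k. (\<eta> t)\<^sup>2 * (\<Sum>j<n. \<alpha> j * (1 - \<eta> k * lam j)\<^sup>2 * lam j * contraction (Suc t) k j))"
    by (intro sum.cong refl) (simp add: contraction_Suc Suc_le_eq sum_distrib_left ac_simps)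
  moreover have "contraction u u j = 1" for u j by (simp add: contraction_def)
  ultimately show ?thesis
    unfolding unrolled_bound_def by (simp add: contraction_Suc algebra_simps)
qed

lemma expected_weighted_error_le_unrolled_bound:
  assumes risk: "\<And>t. t < k \<Longrightarrow> (\<integral>\<^sup>+w. excess_risk lam v tstar (iterate t w) \<partial>P) \<le> ennreal K"
    and "0 \<le> K" and "\<And>j. 0 \<le> \<alpha> j"
  shows "expected_weighted_error k \<alpha> n \<le> ennreal (unrolled_bound K k \<alpha> n)"
  using risk assms(3)
proof (induction k arbitrary: \<alpha>)
  case 0
  then show ?case
    by (simp add: expected_weighted_error_0 unrolled_bound_def contraction_def sum_ennreal)
next
  case (Suc k)
  let ?\<alpha>' = "\<lambda>j. \<alpha> j * (1 - \<eta> k * lam j)\<^sup>2"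
  have "0 \<le> (\<Sum>j<n. \<alpha> j * lam j)"
    using Suc.prems eigenvalue_nonneg by (intro sum_nonneg mult_nonneg_nonneg) auto
  moreover have "0 \<le> unrolled_bound K k ?\<alpha>' n"
    unfolding unrolled_bound_def contraction_def
    using Suc.prems eigenvalue_nonneg hypercontractivity_const_pos \<open>0 \<le> K\<close>
    by (intro add_nonneg_nonneg sum_nonneg mult_nonneg_nonneg prod_nonneg) auto
  moreover have "expected_weighted_error k ?\<alpha>' n \<le> ennreal (unrolled_bound K k ?\<alpha>' n)"
    using Suc by simp
  ultimately have "expected_weighted_error (Suc k) \<alpha> n
      \<le> ennreal (unrolled_bound K k ?\<alpha>' n) + ennreal ((\<eta> k)\<^sup>2 * (2 * C * K + \<sigma>\<^sup>2) * (\<Sum>j<n. \<alpha> j * lam j))"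
    using expected_weighted_error_Suc_le[of \<alpha> K k n] Suc.prems \<open>0 \<le> K\<close>
    by (auto intro: order_trans add_right_mono)
  also have "\<dots> = ennreal (unrolled_bound K (Suc k) \<alpha> n)"
    using \<open>0 \<le> (\<Sum>j<n. \<alpha> j * lam j)\<close> \<open>0 \<le> unrolled_bound K k ?\<alpha>' n\<close> hypercontractivity_const_pos \<open>0 \<le> K\<close>
    by (simp add: unrolled_bound_Suc ennreal_plus[symmetric] ac_simps del: ennreal_plus)
  finally show ?case .
qed

definition admissible_steps :: "nat \<Rightarrow> bool" where
  "admissible_steps N \<longleftrightarrow> (\<forall>i<N. 0 \<le> \<eta> i \<and> \<eta> i * lam 0 \<le> 1 \<and> \<eta> i * (2 * C * (\<Sum>j. lam j)) < 1)"

lemma admissible_steps_mono: "admissible_steps N \<Longrightarrow> k \<le> N \<Longrightarrow> admissible_steps k"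
  by (auto simp: admissible_steps_def)

lemma admissible_step_eigenvalue:
  assumes "admissible_steps k" "i < k"
  shows "0 \<le> \<eta> i * lam j" "\<eta> i * lam j \<le> 1"
proof -
  have "0 \<le> \<eta> i" "\<eta> i * lam 0 \<le> 1" using assms by (auto simp: admissible_steps_def)
  moreover have "\<eta> i * lam j \<le> \<eta> i * lam 0" by (rule mult_left_mono[OF eigenvalue_le_top \<open>0 \<le> \<eta> i\<close>])
  ultimately show "0 \<le> \<eta> i * lam j" "\<eta> i * lam j \<le> 1" using eigenvalue_nonneg[of j] by auto
qed

lemma admissible_step_le:
  assumes "admissible_steps k" "i < k"
  shows "0 \<le> \<eta> i" "\<eta> i \<le> 1 / (2 * C * (\<Sum>j. lam j))"
  using assms hypercontractivity_const_pos trace_pos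
  by (auto simp: admissible_steps_def field_simps)

lemma unrolled_bias_le:
  assumes "admissible_steps k"
  shows "(\<Sum>j<n. lam j / 2 * contraction 0 k j * (tstar j)\<^sup>2) \<le> weighted_sq_error 0 / 2"
proof -
  have "(\<Sum>j<n. lam j / 2 * contraction 0 k j * (tstar j)\<^sup>2) \<le> (\<Sum>j<n. lam j * (tstar j)\<^sup>2) / 2"
    unfolding sum_divide_distrib
  proof (intro sum_mono)
    fix j
    have "contraction 0 k j \<le> 1"
      unfolding contraction_def using admissible_step_eigenvalue[OF assms]
      by (intro prod_le_1) (auto simp: power_le_one)
    then have "lam j * (tstar j)\<^sup>2 * contraction 0 k j \<le> lam j * (tstar j)\<^sup>2"
      by (intro mult_left_le) (simp_all add: eigenvalue_nonneg)
    then show "lam j / 2 * contraction 0 k j * (tstar j)\<^sup>2 \<le> lam j * (tstar j)\<^sup>2 / 2"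
      by (simp add: ac_simps)
  qed
  also have "(\<Sum>j<n. lam j * (tstar j)\<^sup>2) \<le> (\<Sum>j. lam j * (tstar j)\<^sup>2)"
    by (intro sum_le_suminf summable_weighted_tstar) (auto intro: mult_nonneg_nonneg eigenvalue_nonneg)
  also have "(\<Sum>j. lam j * (tstar j)\<^sup>2) = weighted_sq_error 0"
    by (simp add: weighted_sq_error_def coord_error_def)
  finally show ?thesis by simp
qed

lemma unrolled_noise_le:
  assumes "admissible_steps k"
  shows "(\<Sum>t<k. (\<eta> t)\<^sup>2 * (\<Sum>j<n. lam j / 2 * lam j * contraction (Suc t) k j)) \<le> 1 / (4 * C)"
proof -
  define B where "B = 1 / (2 * C * (\<Sum>j. lam j))"
  have "0 \<le> B" unfolding B_def using hypercontractivity_const_pos trace_pos by simp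
  have per_eigenvalue: "(\<Sum>t<k. (\<eta> t)\<^sup>2 * lam j * contraction (Suc t) k j) \<le> B" for j
  proof -
    have "(\<Sum>t<k. (\<eta> t)\<^sup>2 * lam j * contraction (Suc t) k j)
        = (\<Sum>t<k. \<eta> t * (\<eta> t * lam j) * (\<Prod>i\<in>{Suc t..<k}. (1 - \<eta> i * lam j)\<^sup>2))"
      by (simp add: contraction_def power2_eq_square ac_simps)
    also have "\<dots> \<le> B"
      using admissible_step_eigenvalue[OF assms] admissible_step_le[OF assms] \<open>0 \<le> B\<close>
      unfolding B_def by (intro sum_mult_prod_one_minus_power2_le) auto
    finally show ?thesis .
  qed
  have "(\<Sum>t<k. (\<eta> t)\<^sup>2 * (\<Sum>j<n. lam j / 2 * lam j * contraction (Suc t) k j))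
      = (\<Sum>j<n. lam j / 2 * (\<Sum>t<k. (\<eta> t)\<^sup>2 * lam j * contraction (Suc t) k j))"
    unfolding sum_distrib_left by (subst sum.swap) (simp add: ac_simps)
  also have "\<dots> \<le> (\<Sum>j<n. lam j / 2 * B)"
    by (intro sum_mono mult_left_mono per_eigenvalue) (simp add: eigenvalue_nonneg)
  also have "\<dots> = B / 2 * (\<Sum>j<n. lam j)"
    by (simp add: sum_distrib_left ac_simps)
  also have "\<dots> \<le> B / 2 * (\<Sum>j. lam j)"
    using \<open>0 \<le> B\<close>
    by (intro mult_left_mono sum_le_suminf summable_eigenvalues) (auto intro: eigenvalue_nonneg)
  also have "\<dots> = 1 / (4 * C)"
    unfolding B_def using hypercontractivity_const_pos trace_pos by (simp add: field_simps)
  finally show ?thesis .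
qed

lemma unrolled_bound_le:
  assumes "admissible_steps k" "0 \<le> K"
  shows "unrolled_bound K k (\<lambda>j. lam j / 2) n \<le> weighted_sq_error 0 / 2 + (2 * C * K + \<sigma>\<^sup>2) / (4 * C)"
proof -
  have "0 \<le> 2 * C * K + \<sigma>\<^sup>2" using assms(2) hypercontractivity_const_pos by simp
  then show ?thesis
    unfolding unrolled_bound_def
    using unrolled_bias_le[OF assms(1)] mult_left_mono[OF unrolled_noise_le[OF assms(1)]]
    by (intro add_mono) auto
qed

lemma nn_integral_excess_risk_iterate:
  "(\<integral>\<^sup>+w. excess_risk lam v tstar (iterate k w) \<partial>P) = (SUP n. expected_weighted_error k (\<lambda>j. lam j / 2) n)"
  unfolding excess_risk_eq_SUP expected_weighted_error_def
  by (rule nn_integral_monotone_convergence_SUP)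
    (auto simp: incseq_def le_fun_def intro!: sum_mono2)

text \<open>Strong induction on \<open>k\<close>: \<open>K = 2 E(\<theta>\<^sub>0) + \<sigma>\<^sup>2 / (2C)\<close> is the fixed point of
  \<open>K \<mapsto> E(\<theta>\<^sub>0) + (2CK + \<sigma>\<^sup>2) / (4C)\<close>, the bound that \<open>unrolled_bound_le\<close> propagates.\<close>
lemma expected_excess_risk_le:
  assumes "admissible_steps N" "k \<le> N"
  shows "(\<integral>\<^sup>+w. excess_risk lam v tstar (iterate k w) \<partial>P) \<le> ennreal (weighted_sq_error 0 + \<sigma>\<^sup>2 / (2 * C))"
  using assms(2)
proof (induction k rule: less_induct)
  case (less k)
  define K where "K = weighted_sq_error 0 + \<sigma>\<^sup>2 / (2 * C)"
  have "0 \<le> K" unfolding K_def using weighted_sq_error_nonneg hypercontractivity_const_pos by simp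
  have "admissible_steps k" using assms(1) less.prems by (rule admissible_steps_mono)
  have "expected_weighted_error k (\<lambda>j. lam j / 2) n \<le> ennreal K" for n
  proof -
    have "expected_weighted_error k (\<lambda>j. lam j / 2) n \<le> ennreal (unrolled_bound K k (\<lambda>j. lam j / 2) n)"
      using less \<open>0 \<le> K\<close> eigenvalue_nonneg
      by (intro expected_weighted_error_le_unrolled_bound) (auto simp: K_def)
    also have "\<dots> \<le> ennreal (weighted_sq_error 0 / 2 + (2 * C * K + \<sigma>\<^sup>2) / (4 * C))"
      by (intro ennreal_leI unrolled_bound_le \<open>admissible_steps k\<close> \<open>0 \<le> K\<close>)
    also have "weighted_sq_error 0 / 2 + (2 * C * K + \<sigma>\<^sup>2) / (4 * C) = K"
      unfolding K_def using hypercontractivity_const_pos by (simp add: field_simps)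
    finally show ?thesis .
  qed
  then show ?case
    unfolding nn_integral_excess_risk_iterate K_def by (rule SUP_least)
qed

end

lemma excess_risk_eq_0_if_top_eigenvalue_eq_0:
  assumes "eigen_system \<rho> \<phi> lam v" "lam 0 = 0"
  shows "excess_risk lam v t \<theta> = 0"
proof -
  have "lam j = 0" for j
    using assms unfolding eigen_system_def antimono_def by (metis le0 order_antisym)
  then show ?thesis by (simp add: excess_risk_def)
qed

lemma sgd_expected_excess_risk_le:
  fixes \<rho> :: "'x measure" and \<phi> :: "'x \<Rightarrow> 'h::{real_inner,banach,second_countable_topology}"
    and P :: "'w measure"
  assumes "prob_space \<rho>" "\<phi> \<in> borel_measurable \<rho>" "integrable \<rho> (\<lambda>z. (norm (\<phi> z))\<^sup>2)"
    and eigen: "eigen_system \<rho> \<phi> lam v" and "hypercontractive \<rho> \<phi> C" "0 < \<sigma>"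
    and "fstar \<in> borel_measurable \<rho>"
    and "(\<lambda>n. \<integral>\<^sup>+z. ennreal ((fstar z - (\<Sum>j<n. a j * lam j powr ((s - 1) / 2) * (\<phi> z \<bullet> v j)))\<^sup>2) \<partial>\<rho>)
        \<longlonglongrightarrow> 0"
    and "excess_risk lam v (theta_star a lam s) 0 < \<infinity>"
    and "prob_space P"
    and "prob_space.indep_vars P (\<lambda>_. \<rho> \<Otimes>\<^sub>M borel) (\<lambda>k w. (x k w, eps k w)) UNIV"
    and distr: "\<forall>k. distr P (\<rho> \<Otimes>\<^sub>M borel) (\<lambda>w. (x k w, eps k w)) = \<rho> \<Otimes>\<^sub>M density lborel (normal_density 0 \<sigma>)"
    and steps: "\<forall>i<N. 0 \<le> \<eta> i \<and> \<eta> i * lam 0 \<le> 1 \<and> \<eta> i * (2 * C * (\<Sum>j. lam j)) < 1"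
    and "k \<le> N"
  shows "(\<integral>\<^sup>+w. excess_risk lam v (theta_star a lam s)
            (sgd_iter \<eta> \<phi> (\<lambda>i. x i w) (\<lambda>i. fstar (x i w) + eps i w) k) \<partial>P)
     \<le> ennreal (2 * enn2real (excess_risk lam v (theta_star a lam s) 0) + \<sigma>\<^sup>2 / (2 * C))"
proof (cases "lam 0 = 0")
  case True
  then show ?thesis using excess_risk_eq_0_if_top_eigenvalue_eq_0[OF eigen] by simp
next
  case False
  then have "0 < lam 0" using eigen by (auto simp: eigen_system_def order_less_le)
  interpret kernel_sgd \<rho> \<phi> lam v C a s fstar P x eps \<sigma> \<eta>
    by (intro kernel_sgd.intro kernel_regression.intro kernel_features.intro
        kernel_regression_axioms.intro kernel_sgd_axioms.intro)
      (fact assms \<open>0 < lam 0\<close> distr[rule_format])+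
  have "admissible_steps N" using steps by (simp add: admissible_steps_def)
  moreover have "2 * enn2real (excess_risk lam v tstar 0) = weighted_sq_error 0"
    using weighted_sq_error_nonneg[of 0] by (simp add: excess_risk_eq_weighted_sq_error)
  ultimately show ?thesis
    using expected_excess_risk_le[of N k] \<open>k \<le> N\<close> by (simp add: iterate_def)
qed

theorem mainTheorem11:
  shows "\<exists>Mf :: real \<Rightarrow> real \<Rightarrow> real \<Rightarrow> real.
   \<forall>(\<rho> :: 'x measure) (\<phi> :: 'x \<Rightarrow> 'h::{real_inner,banach,second_countable_topology})
    (lam :: nat \<Rightarrow> real) (v :: nat \<Rightarrow> 'h) (C :: real) (\<sigma> :: real) (s :: real)
    (a :: nat \<Rightarrow> real) (fstar :: 'x \<Rightarrow> real)
    (P :: 'w measure) (x :: nat \<Rightarrow> 'w \<Rightarrow> 'x) (eps :: nat \<Rightarrow> 'w \<Rightarrow> real)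
    (\<eta> :: nat \<Rightarrow> real) (N :: nat).
     prob_space \<rho> \<longrightarrow>
     \<phi> \<in> borel_measurable \<rho> \<longrightarrow>
     integrable \<rho> (\<lambda>z. (norm (\<phi> z))\<^sup>2) \<longrightarrow>
     eigen_system \<rho> \<phi> lam v \<longrightarrow>
     hypercontractive \<rho> \<phi> C \<longrightarrow>
     0 < \<sigma> \<longrightarrow>
     summable (\<lambda>j. (a j)\<^sup>2) \<longrightarrow> (\<Sum>j. (a j)\<^sup>2) \<le> 1 \<longrightarrow>
     fstar \<in> borel_measurable \<rho> \<longrightarrow>
     (\<lambda>n. \<integral>\<^sup>+z. ennreal ((fstar z - (\<Sum>j<n. a j * lam j powr ((s - 1) / 2) * (\<phi> z \<bullet> v j)))\<^sup>2) \<partial>\<rho>)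
        \<longlonglongrightarrow> 0 \<longrightarrow>
     excess_risk lam v (theta_star a lam s) 0 < \<infinity> \<longrightarrow>
     prob_space P \<longrightarrow>
     prob_space.indep_vars P (\<lambda>_. \<rho> \<Otimes>\<^sub>M borel) (\<lambda>k w. (x k w, eps k w)) UNIV \<longrightarrow>
     (\<forall>k. distr P (\<rho> \<Otimes>\<^sub>M borel) (\<lambda>w. (x k w, eps k w))
            = \<rho> \<Otimes>\<^sub>M density lborel (normal_density 0 \<sigma>)) \<longrightarrow>
     (\<forall>i<N. 0 \<le> \<eta> i \<and> \<eta> i * lam 0 \<le> 1 \<and> \<eta> i * (2 * C * (\<Sum>j. lam j)) < 1) \<longrightarrow>
     (\<forall>k\<le>N.
        (\<integral>\<^sup>+w. excess_risk lam v (theta_star a lam s)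
                 (sgd_iter \<eta> \<phi> (\<lambda>i. x i w) (\<lambda>i. fstar (x i w) + eps i w) k) \<partial>P)
        \<le> ennreal (Mf C (\<sigma>\<^sup>2) (enn2real (excess_risk lam v (theta_star a lam s) 0))))"
  by (intro exI[of _ "\<lambda>C \<sigma>\<^sub>2 E\<^sub>0. 2 * E\<^sub>0 + \<sigma>\<^sub>2 / (2 * C)"] allI impI)
    (rule sgd_expected_excess_risk_le; assumption)

end
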